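(* Assume (A1) $\mu_k\sim1/k^2$ and (A2) $\nabla L$ is $M$-Lipschitz. Then $$\int L\,d\pi-L(\tilde x)\lesssim\frac1\beta\Big(\sqrt{\frac{2M}{\lambda}}+1\Big)+\lambda\Big(\frac{\|\tilde x\|_{\mathcal H_K}}{\sqrt\beta}+\|\tilde x\|_{\mathcal H_K}^2\Big).$$
   Context: Let $\mathcal H$ be a separable real Hilbert space with orthonormal basis $(f_k)_{k\ge0}$ and $\mu_0\ge\mu_1\ge\cdots>0$. $\mathcal H_K=\{\sum_k\alpha_kf_k:\sum_k\alpha_k^2/\mu_k<\infty\}$ with $\|\sum_k\alpha_kf_k\|_{\mathcal H_K}^2=\sum_k\alpha_k^2/\mu_k$. Fix $\lambda>0$, $\beta>0$; $A$ is the diagonal operator $Af_k=-(\lambda/\mu_k)f_k$. $L:\mathcal H\to\mathbb R$ is Fréchet differentiable and $\tilde x$ is a global minimizer of $L(x)+\frac\lambda2\|x\|_{\mathcal H_K}^2$. $\pi$ is the Gibbs measure $\frac{d\pi}{d\nu_\beta}(x)\propto\exp(-\beta L(x))$, where $\nu_\beta$ is the centered Gaussian measure on $\mathcal H$ with covariance operator $(-\beta A)^{-1}$ (the invariant law of $dX=(AX-\nabla L(X))dt+\sqrt{2/\beta}\,dW$). $\lesssim$ denotes inequality up to a positive multiplicative constant. *)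

theory Defs
  imports "HOL-Probability.Probability"
begin

definition orthonormal_basis :: "(nat \<Rightarrow> 'a::{real_inner,complete_space}) \<Rightarrow> bool" where
  "orthonormal_basis f \<longleftrightarrow>
     (\<forall>i j. inner (f i) (f j) = (if i = j then 1 else 0)) \<and> closure (span (range f)) = UNIV"

text \<open>RKHS H_K: x = sum_k alpha_k f_k with sum alpha_k^2/mu_k finite; squared norm.\<close>
definition in_HK :: "(nat \<Rightarrow> real) \<Rightarrow> (nat \<Rightarrow> 'a::{real_inner,complete_space}) \<Rightarrow> 'a \<Rightarrow> bool" where
  "in_HK \<mu> f x \<longleftrightarrow> summable (\<lambda>k. (inner x (f k))\<^sup>2 / \<mu> k)"

definition HK_norm :: "(nat \<Rightarrow> real) \<Rightarrow> (nat \<Rightarrow> 'a::{real_inner,complete_space}) \<Rightarrow> 'a \<Rightarrow> real" where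
  "HK_norm \<mu> f x = sqrt (\<Sum>k. (inner x (f k))\<^sup>2 / \<mu> k)"

text \<open>Centered Gaussian measure nu_beta on H with covariance (-beta A)^{-1}, where
  A f_k = -(lambda/mu_k) f_k; i.e. covariance eigenvalues mu_k/(beta*lambda) on f_k.\<close>
definition gauss_ref ::
  "(nat \<Rightarrow> real) \<Rightarrow> (nat \<Rightarrow> 'a::{real_inner,complete_space}) \<Rightarrow> real \<Rightarrow> real \<Rightarrow> 'a measure" where
  "gauss_ref \<mu> f lam \<beta> =
     distr (PiM (UNIV :: nat set) (\<lambda>_. density lborel std_normal_density)) borel
       (\<lambda>\<omega>. \<Sum>k. (sqrt (\<mu> k / (\<beta> * lam)) * \<omega> k) *\<^sub>R f k)"

definition gibbs ::
  "(nat \<Rightarrow> real) \<Rightarrow> (nat \<Rightarrow> 'a::{real_inner,complete_space}) \<Rightarrow> real \<Rightarrow> real \<Rightarrow> ('a \<Rightarrow> real) \<Rightarrow> 'a measure" where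
  "gibbs \<mu> f lam \<beta> L =
     density (gauss_ref \<mu> f lam \<beta>)
       (\<lambda>x. ennreal (exp (- \<beta> * L x) / (\<integral>y. exp (- \<beta> * L y) \<partial>gauss_ref \<mu> f lam \<beta>)))"

end

theory Submission
  imports Defs
begin

(* Gibbs variational principle: the Gibbs mean of L is at most the free energy
   E_rho[L] + KL(rho || nu_beta) / beta of any trial measure rho.  Take rho Gaussian, centred
   at the truncation x_N = sum_{k<N} <xt, f_k> f_k of xt and with the first N coordinates
   shrunk by s_k = (1 + M mu_k / lam)^(-1/2).  The descent lemma bounds E_rho[L] by L(x_N) plus
   a trace term; for this s_k the trace and entropy terms combine to
   sum_k ln (1 + M mu_k / lam) / (2 beta), and the mean shift costs at most lam/2 ||xt||_K^2.
   Letting N -> oo and using mu_k <= c2/(k+1)^2, the log-sum is O(sqrt (M / lam) + 1). *)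

section \<open>Orthonormal expansions\<close>

lemma norm_sum_orthonormal_sq:
  fixes f :: "nat \<Rightarrow> 'a::real_inner"
  assumes on: "\<And>i j. inner (f i) (f j) = (if i = j then 1 else 0)" and A: "finite A"
  shows "(norm (\<Sum>k\<in>A. y k *\<^sub>R f k))\<^sup>2 = (\<Sum>k\<in>A. (y k)\<^sup>2)"
proof -
  have coeff: "inner (f j) (\<Sum>k\<in>A. y k *\<^sub>R f k) = (if j \<in> A then y j else 0)" for j
  proof -
    have "inner (f j) (\<Sum>k\<in>A. y k *\<^sub>R f k) = (\<Sum>k\<in>A. if k = j then y j else 0)"
      by (simp add: inner_sum_right on) (rule sum.cong, auto)
    then show ?thesis using A by simp
  qed
  have "(norm (\<Sum>k\<in>A. y k *\<^sub>R f k))\<^sup>2 = (\<Sum>i\<in>A. y i * inner (f i) (\<Sum>k\<in>A. y k *\<^sub>R f k))"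
    by (simp add: power2_norm_eq_inner inner_sum_left)
  also have "\<dots> = (\<Sum>i\<in>A. (y i)\<^sup>2)"
    by (rule sum.cong) (auto simp: coeff power2_eq_square)
  finally show ?thesis .
qed

lemma bessel_inequality_partial:
  fixes f :: "nat \<Rightarrow> 'a::real_inner"
  assumes on: "\<And>i j. inner (f i) (f j) = (if i = j then 1 else 0)"
  shows "(\<Sum>k<n. (inner x (f k))\<^sup>2) \<le> (norm x)\<^sup>2"
proof -
  let ?p = "\<Sum>k<n. inner x (f k) *\<^sub>R f k"
  have "inner x ?p = (\<Sum>k<n. (inner x (f k))\<^sup>2)"
    by (simp add: inner_sum_right power2_eq_square)
  moreover have "inner ?p ?p = (\<Sum>k<n. (inner x (f k))\<^sup>2)"
    using norm_sum_orthonormal_sq[OF on finite_lessThan] by (simp add: power2_norm_eq_inner)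
  moreover have "0 \<le> inner (x - ?p) (x - ?p)" by simp
  then have "0 \<le> inner x x - 2 * inner x ?p + inner ?p ?p"
    by (simp add: inner_diff_left inner_diff_right inner_commute)
  ultimately show ?thesis by (simp add: power2_norm_eq_inner)
qed

lemma summable_inner_sq_orthonormal:
  fixes f :: "nat \<Rightarrow> 'a::real_inner"
  assumes "\<And>i j. inner (f i) (f j) = (if i = j then 1 else 0)"
  shows "summable (\<lambda>k. (inner x (f k))\<^sup>2)"
  by (rule summableI_nonneg_bounded[where x="(norm x)\<^sup>2"]) (auto intro: bessel_inequality_partial[OF assms])

lemma summable_orthonormal_series:
  fixes f :: "nat \<Rightarrow> 'a::{real_inner,complete_space}"
  assumes on: "\<And>i j. inner (f i) (f j) = (if i = j then 1 else 0)"
    and sq: "summable (\<lambda>k. (y k)\<^sup>2)"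
  shows "summable (\<lambda>k. y k *\<^sub>R f k)"
proof -
  let ?S = "\<lambda>n. \<Sum>k<n. y k *\<^sub>R f k"
  have dist_partial: "dist (?S m) (?S n) = sqrt (\<Sum>k\<in>{n..<m}. (y k)\<^sup>2)" if "n \<le> m" for m n
  proof -
    have "?S m - ?S n = (\<Sum>k\<in>{n..<m}. y k *\<^sub>R f k)"
      using that by (metis sum_diff_nat_ivl lessThan_atLeast0 zero_le)
    then show ?thesis using norm_sum_orthonormal_sq[OF on finite_atLeastLessThan, of y n m]
      by (simp add: dist_norm real_sqrt_unique)
  qed
  have "Cauchy ?S"
  proof (rule metric_CauchyI)
    fix e :: real assume e: "e > 0"
    then obtain N where N: "\<And>m n. m \<ge> N \<Longrightarrow> norm (\<Sum>k\<in>{m..<n}. (y k)\<^sup>2) < e\<^sup>2"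
      using sq by (subst (asm) summable_Cauchy) (meson zero_less_power)
    have "dist (?S m) (?S n) < e" if "m \<ge> N" "n \<ge> N" "n \<le> m" for m n
    proof -
      have "sqrt (\<Sum>k\<in>{n..<m}. (y k)\<^sup>2) < sqrt (e\<^sup>2)"
        using N[of n m] that by (intro real_sqrt_less_mono) auto
      then show ?thesis using dist_partial[OF \<open>n \<le> m\<close>] e by simp
    qed
    then have "dist (?S m) (?S n) < e" if "m \<ge> N" "n \<ge> N" for m n
      using that by (metis dist_commute nle_le)
    then show "\<exists>N. \<forall>m\<ge>N. \<forall>n\<ge>N. dist (?S m) (?S n) < e" by blast
  qed
  then show ?thesis unfolding summable_def sums_def using Cauchy_convergent convergent_def by blast
qed

lemma sums_orthonormal_norm_sq:
  fixes f :: "nat \<Rightarrow> 'a::real_inner"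
  assumes on: "\<And>i j. inner (f i) (f j) = (if i = j then 1 else 0)"
    and "(\<lambda>k. y k *\<^sub>R f k) sums v"
  shows "(\<lambda>k. (y k)\<^sup>2) sums (norm v)\<^sup>2"
proof -
  have "(\<lambda>n. (norm (\<Sum>k<n. y k *\<^sub>R f k))\<^sup>2) \<longlonglongrightarrow> (norm v)\<^sup>2"
    using assms(2) unfolding sums_def by (intro tendsto_intros)
  then show ?thesis unfolding sums_def using norm_sum_orthonormal_sq[OF on] by simp
qed

lemma summable_abs_mult_of_summable_sq:
  fixes x y :: "nat \<Rightarrow> real"
  assumes "summable (\<lambda>k. (x k)\<^sup>2)" and "summable (\<lambda>k. (y k)\<^sup>2)"
  shows "summable (\<lambda>k. \<bar>x k * y k\<bar>)"
proof (rule summable_comparison_test'[OF summable_mult[OF summable_add[OF assms], of "1/2"]])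
  fix k
  have "0 \<le> (\<bar>x k\<bar> - \<bar>y k\<bar>)\<^sup>2" by simp
  then show "norm \<bar>x k * y k\<bar> \<le> 1/2 * ((x k)\<^sup>2 + (y k)\<^sup>2)"
    by (simp add: abs_mult power2_eq_square algebra_simps)
qed

lemma sums_inner_right:
  assumes "(\<lambda>k. y k *\<^sub>R f k) sums v"
  shows "(\<lambda>k. y k * inner u (f k)) sums (inner u v)"
  using bounded_linear.sums[OF bounded_linear_inner_right assms] by simp

lemma orthonormal_basis_sums:
  fixes f :: "nat \<Rightarrow> 'a::{real_inner,complete_space}"
  assumes onb: "orthonormal_basis f"
  shows "(\<lambda>k. inner x (f k) *\<^sub>R f k) sums x"
proof -
  have on: "\<And>i j. inner (f i) (f j) = (if i = j then 1 else 0)"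
    using onb by (simp add: orthonormal_basis_def)
  obtain y where y: "(\<lambda>k. inner x (f k) *\<^sub>R f k) sums y"
    using summable_orthonormal_series[OF on summable_inner_sq_orthonormal[OF on]]
    by (auto simp: summable_def)
  have orth: "inner (x - y) (f j) = 0" for j
  proof -
    have "(\<lambda>k. inner x (f k) * inner (f j) (f k)) = (\<lambda>k. if k = j then inner x (f j) else 0)"
      by (auto simp: on)
    then have "(\<lambda>k. inner x (f k) * inner (f j) (f k)) sums (inner x (f j))"
      using sums_single[of j "\<lambda>_. inner x (f j)"] by simp
    then have "inner (f j) y = inner x (f j)"
      using sums_inner_right[OF y] sums_unique2 by blast
    then show ?thesis by (simp add: inner_diff_left inner_diff_right inner_commute)
  qed
  have "span (range f) \<subseteq> {z. inner (x - y) z = 0}"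
    by (rule span_minimal) (use orth in \<open>auto simp: inner_commute subspace_def inner_add_right\<close>)
  then have "closure (span (range f)) \<subseteq> {z. inner (x - y) z = 0}"
    by (rule closure_minimal) (intro closed_Collect_eq continuous_intros)
  then have "inner (x - y) (x - y) = 0" using onb unfolding orthonormal_basis_def by blast
  with y show ?thesis by simp
qed

lemma HK_norm_nonneg:
  assumes "\<And>k. \<mu> k > 0" and "in_HK \<mu> f x"
  shows "HK_norm \<mu> f x \<ge> 0"
  using assms unfolding HK_norm_def in_HK_def by (simp add: suminf_nonneg less_imp_le)

lemma sum_inner_sq_div_le_HK_norm_sq:
  assumes "\<And>k. \<mu> k > 0" and "in_HK \<mu> f x"
  shows "(\<Sum>k<N. (inner x (f k))\<^sup>2 / \<mu> k) \<le> (HK_norm \<mu> f x)\<^sup>2"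
  using assms unfolding HK_norm_def in_HK_def by (simp add: sum_le_suminf less_imp_le suminf_nonneg)

section \<open>The descent lemma and the Gibbs variational inequality\<close>

lemma lipschitz_gradient_upper_bound:
  fixes L :: "'a::real_inner \<Rightarrow> real"
  assumes der: "\<And>x. (L has_derivative (\<lambda>h. inner (gradL x) h)) (at x)"
    and lip: "M-lipschitz_on UNIV gradL"
  shows "L y \<le> L x + inner (gradL x) (y - x) + M / 2 * (norm (y - x))\<^sup>2"
proof -
  define d where "d = y - x"
  define u where "u t = L (x + t *\<^sub>R d) - t * inner (gradL x) d - M / 2 * t\<^sup>2 * (norm d)\<^sup>2" for t :: real
  have "((\<lambda>t. L (x + t *\<^sub>R d)) has_real_derivative inner (gradL (x + t *\<^sub>R d)) d) (at t)" for t
  proof -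
    have "((\<lambda>t. x + t *\<^sub>R d) has_derivative (\<lambda>h. h *\<^sub>R d)) (at t)"
      by (auto intro!: derivative_eq_intros)
    from has_derivative_compose[OF this der] show ?thesis
      by (simp add: has_field_derivative_def mult_commute_abs)
  qed
  then have du: "(u has_real_derivative
      (inner (gradL (x + t *\<^sub>R d) - gradL x) d - M * t * (norm d)\<^sup>2)) (at t)" for t
    unfolding u_def by (auto intro!: derivative_eq_intros simp: inner_diff_left)
  have "inner (gradL (x + t *\<^sub>R d) - gradL x) d \<le> M * t * (norm d)\<^sup>2" if "0 \<le> t" for t
  proof -
    have "inner (gradL (x + t *\<^sub>R d) - gradL x) d \<le> norm (gradL (x + t *\<^sub>R d) - gradL x) * norm d"
      by (rule norm_cauchy_schwarz)
    also have "\<dots> \<le> M * norm (t *\<^sub>R d) * norm d"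
      using lipschitz_onD[OF lip, of "x + t *\<^sub>R d" x] by (simp add: dist_norm mult_right_mono)
    also have "\<dots> = M * t * (norm d)\<^sup>2" using that by (simp add: power2_eq_square)
    finally show ?thesis .
  qed
  then have "u 1 \<le> u 0"
    using DERIV_nonpos_imp_nonincreasing[of 0 1 u] du by force
  then show ?thesis by (simp add: u_def d_def)
qed

lemma exp_integral_le_integral_majorant:
  fixes G h W :: "'b \<Rightarrow> real"
  assumes G0: "\<And>\<omega>. 0 \<le> G \<omega>" and iG: "integrable M G" and G1: "(\<integral>\<omega>. G \<omega> \<partial>M) = 1"
    and iGh: "integrable M (\<lambda>\<omega>. G \<omega> * h \<omega>)" and iW: "integrable M W"
    and maj: "\<And>\<omega>. G \<omega> * exp (h \<omega>) \<le> W \<omega>"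
  shows "exp (\<integral>\<omega>. G \<omega> * h \<omega> \<partial>M) \<le> (\<integral>\<omega>. W \<omega> \<partial>M)"
proof -
  define a where "a = (\<integral>\<omega>. G \<omega> * h \<omega> \<partial>M)"
  have "exp a * ((1 - a) * G \<omega> + G \<omega> * h \<omega>) \<le> W \<omega>" for \<omega>
  proof -
    have "exp a * (1 + (h \<omega> - a)) \<le> exp a * exp (h \<omega> - a)"
      using exp_ge_add_one_self[of "h \<omega> - a"] by simp
    then have "G \<omega> * (exp a * (1 + (h \<omega> - a))) \<le> G \<omega> * exp (h \<omega>)"
      using G0[of \<omega>] by (intro mult_left_mono) (auto simp: exp_diff)
    then show ?thesis using maj[of \<omega>] by (simp add: algebra_simps)
  qed
  then have "(\<integral>\<omega>. exp a * ((1 - a) * G \<omega> + G \<omega> * h \<omega>) \<partial>M) \<le> (\<integral>\<omega>. W \<omega> \<partial>M)"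
    by (intro integral_mono) (use iG iGh iW in auto)
  moreover have "(\<integral>\<omega>. exp a * ((1 - a) * G \<omega> + G \<omega> * h \<omega>) \<partial>M) = exp a"
    using iG iGh by (simp add: Bochner_Integration.integral_add G1 a_def[symmetric])
  ultimately show ?thesis by (simp add: a_def)
qed

lemma entropy_nonneg:
  fixes p :: "'b \<Rightarrow> real"
  assumes "prob_space M" and p0: "\<And>\<omega>. 0 < p \<omega>" and ip: "integrable M p"
    and p1: "(\<integral>\<omega>. p \<omega> \<partial>M) = 1" and ipl: "integrable M (\<lambda>\<omega>. p \<omega> * ln (p \<omega>))"
  shows "0 \<le> (\<integral>\<omega>. p \<omega> * ln (p \<omega>) \<partial>M)"
proof -
  interpret prob_space M by fact
  have "p \<omega> - 1 \<le> p \<omega> * ln (p \<omega>)" for \<omega>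
  proof -
    have "ln (1 / p \<omega>) \<le> 1 / p \<omega> - 1" using p0[of \<omega>] by (intro ln_le_minus_one) simp
    then have "p \<omega> * (- ln (p \<omega>)) \<le> p \<omega> * (1 / p \<omega> - 1)"
      using p0[of \<omega>] by (intro mult_left_mono) (auto simp: ln_div)
    then show ?thesis using p0[of \<omega>] by (simp add: algebra_simps)
  qed
  then have "(\<integral>\<omega>. p \<omega> - 1 \<partial>M) \<le> (\<integral>\<omega>. p \<omega> * ln (p \<omega>) \<partial>M)"
    by (intro integral_mono) (use ip ipl in auto)
  then show ?thesis using ip by (simp add: p1 prob_space)
qed

lemma gibbs_mean_le_neg_ln_partition:
  fixes V :: "'b \<Rightarrow> real" and \<beta> :: real and M :: "'b measure"
  defines "Z \<equiv> \<integral>y. exp (- \<beta> * V y) \<partial>M"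
  assumes "prob_space M" and Z0: "Z > 0"
    and iW: "integrable M (\<lambda>\<omega>. exp (- \<beta> * V \<omega>))"
    and iWV: "integrable M (\<lambda>\<omega>. exp (- \<beta> * V \<omega>) / Z * V \<omega>)"
  shows "\<beta> * (\<integral>\<omega>. exp (- \<beta> * V \<omega>) / Z * V \<omega> \<partial>M) \<le> - ln Z"
proof -
  define p where "p \<omega> = exp (- \<beta> * V \<omega>) / Z" for \<omega>
  have ip: "integrable M p" unfolding p_def using iW by simp
  have ipV: "integrable M (\<lambda>\<omega>. p \<omega> * V \<omega>)" using iWV unfolding p_def .
  have lnp: "p \<omega> * ln (p \<omega>) = - \<beta> * (p \<omega> * V \<omega>) - ln Z * p \<omega>" for \<omega>
    unfolding p_def using Z0 by (simp add: ln_div field_simps)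
  have p1: "(\<integral>\<omega>. p \<omega> \<partial>M) = 1" unfolding p_def using Z0 by (simp add: Z_def)
  have "0 \<le> (\<integral>\<omega>. p \<omega> * ln (p \<omega>) \<partial>M)"
  proof (rule entropy_nonneg[OF assms(2) _ ip p1])
    show "integrable M (\<lambda>\<omega>. p \<omega> * ln (p \<omega>))" unfolding lnp using ip ipV by simp
  qed (use Z0 in \<open>simp add: p_def\<close>)
  also have "(\<integral>\<omega>. p \<omega> * ln (p \<omega>) \<partial>M) = - \<beta> * (\<integral>\<omega>. p \<omega> * V \<omega> \<partial>M) - ln Z"
    unfolding lnp using ip ipV by (simp add: Bochner_Integration.integral_diff p1)
  finally show ?thesis unfolding p_def by simp
qed

lemma gibbs_variational_inequality:
  fixes V q G :: "'b \<Rightarrow> real" and \<beta> :: real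
  assumes "prob_space M" and b: "\<beta> > 0"
    and iW: "integrable M (\<lambda>\<omega>. exp (- \<beta> * V \<omega>))"
    and iWV: "integrable M (\<lambda>\<omega>. exp (- \<beta> * V \<omega>) / (\<integral>y. exp (- \<beta> * V y) \<partial>M) * V \<omega>)"
    and G0: "\<And>\<omega>. G \<omega> > 0" and iG: "integrable M G" and G1: "(\<integral>\<omega>. G \<omega> \<partial>M) = 1"
    and Vq: "\<And>\<omega>. V \<omega> \<le> q \<omega>"
    and iGq: "integrable M (\<lambda>\<omega>. G \<omega> * q \<omega>)"
    and iGl: "integrable M (\<lambda>\<omega>. G \<omega> * ln (G \<omega>))"
  shows "(\<integral>\<omega>. exp (- \<beta> * V \<omega>) / (\<integral>y. exp (- \<beta> * V y) \<partial>M) * V \<omega> \<partial>M)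
     \<le> (\<integral>\<omega>. G \<omega> * q \<omega> \<partial>M) + (1 / \<beta>) * (\<integral>\<omega>. G \<omega> * ln (G \<omega>) \<partial>M)"
proof -
  define Z where "Z = (\<integral>y. exp (- \<beta> * V y) \<partial>M)"
  define a where "a = - \<beta> * (\<integral>\<omega>. G \<omega> * q \<omega> \<partial>M) - (\<integral>\<omega>. G \<omega> * ln (G \<omega>) \<partial>M)"
  have h_eq: "(\<lambda>\<omega>. G \<omega> * (- \<beta> * q \<omega> - ln (G \<omega>)))
      = (\<lambda>\<omega>. - \<beta> * (G \<omega> * q \<omega>) - G \<omega> * ln (G \<omega>))"
    by (auto simp: algebra_simps)
  have "exp (\<integral>\<omega>. G \<omega> * (- \<beta> * q \<omega> - ln (G \<omega>)) \<partial>M) \<le> Z"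
    unfolding Z_def
  proof (rule exp_integral_le_integral_majorant[OF _ iG G1 _ iW])
    show "integrable M (\<lambda>\<omega>. G \<omega> * (- \<beta> * q \<omega> - ln (G \<omega>)))"
      unfolding h_eq using iGq iGl by simp
    show "G \<omega> * exp (- \<beta> * q \<omega> - ln (G \<omega>)) \<le> exp (- \<beta> * V \<omega>)" for \<omega>
      using G0[of \<omega>] Vq[of \<omega>] b by (simp add: exp_diff)
  qed (use G0 less_imp_le in blast)
  moreover have "(\<integral>\<omega>. G \<omega> * (- \<beta> * q \<omega> - ln (G \<omega>)) \<partial>M) = a"
    unfolding h_eq a_def using iGq iGl by (simp add: Bochner_Integration.integral_diff)
  ultimately have Za: "exp a \<le> Z" by simp
  then have "Z > 0" using exp_gt_zero[of a] by linarith
  then have "\<beta> * (\<integral>\<omega>. exp (- \<beta> * V \<omega>) / Z * V \<omega> \<partial>M) \<le> - ln Z"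
    unfolding Z_def using assms(1) iW iWV by (intro gibbs_mean_le_neg_ln_partition)
  also have "\<dots> \<le> - a"
    using Za \<open>Z > 0\<close> ln_exp[of a] ln_le_cancel_iff[of "exp a" Z] by simp
  finally show ?thesis unfolding Z_def a_def using b by (simp add: field_simps)
qed

section \<open>Sequences of independent Gaussians\<close>

abbreviation std_normal :: "real measure" where
  "std_normal \<equiv> density lborel std_normal_density"

abbreviation std_normal_seq :: "(nat \<Rightarrow> real) measure" where
  "std_normal_seq \<equiv> PiM UNIV (\<lambda>_. std_normal)"

lemma prob_space_std_normal: "prob_space std_normal"
  using prob_space_normal_density[of 1 0] by simp

lemma prob_space_std_normal_seq: "prob_space std_normal_seq"
  by (rule prob_space_PiM) (rule prob_space_std_normal)

lemma
  fixes h :: "nat \<Rightarrow> real \<Rightarrow> real"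
  assumes K: "finite K" and h: "\<And>i. i \<in> K \<Longrightarrow> integrable std_normal (h i)"
  shows integrable_std_normal_seq_prod: "integrable std_normal_seq (\<lambda>\<omega>. \<Prod>i\<in>K. h i (\<omega> i))"
    and integral_std_normal_seq_prod:
      "(\<integral>\<omega>. (\<Prod>i\<in>K. h i (\<omega> i)) \<partial>std_normal_seq) = (\<Prod>i\<in>K. \<integral>t. h i t \<partial>std_normal)"
proof -
  interpret product_prob_space "\<lambda>_::nat. std_normal" UNIV
    by (rule product_prob_spaceI) (rule prob_space_std_normal)
  have D: "distr std_normal_seq (PiM K (\<lambda>_. std_normal)) (\<lambda>x. restrict x K) = PiM K (\<lambda>_. std_normal)"
    using K by (intro distr_PiM_restrict_finite) auto
  have Fm: "(\<lambda>x. \<Prod>i\<in>K. h i (x i)) \<in> borel_measurable (PiM K (\<lambda>_. std_normal))"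
  proof (rule borel_measurable_prod)
    fix i assume i: "i \<in> K"
    show "(\<lambda>x. h i (x i)) \<in> borel_measurable (PiM K (\<lambda>_. std_normal))"
      using measurable_compose[OF measurable_component_singleton[OF i] borel_measurable_integrable[OF h[OF i]]]
      by simp
  qed
  have R: "(\<lambda>x. restrict x K) \<in> measurable std_normal_seq (PiM K (\<lambda>_. std_normal))"
    by (rule measurable_restrict_subset) auto
  have eq: "(\<Prod>i\<in>K. h i (restrict \<omega> K i)) = (\<Prod>i\<in>K. h i (\<omega> i))" for \<omega>
    by (rule prod.cong) auto
  have "integrable (PiM K (\<lambda>_. std_normal)) (\<lambda>x. \<Prod>i\<in>K. h i (x i))"
    using K h by (intro product_integrable_prod) auto
  then show "integrable std_normal_seq (\<lambda>\<omega>. \<Prod>i\<in>K. h i (\<omega> i))"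
    using integrable_distr_eq[OF R Fm] D eq by simp
  have "(\<integral>x. (\<Prod>i\<in>K. h i (x i)) \<partial>PiM K (\<lambda>_. std_normal)) = (\<Prod>i\<in>K. \<integral>t. h i t \<partial>std_normal)"
    using K h by (intro product_integral_prod) auto
  then show "(\<integral>\<omega>. (\<Prod>i\<in>K. h i (\<omega> i)) \<partial>std_normal_seq) = (\<Prod>i\<in>K. \<integral>t. h i t \<partial>std_normal)"
    using integral_distr[OF R Fm] D eq by simp
qed

lemma
  assumes s: "s > 0"
  shows integrable_normal_density_quadratic:
      "integrable lborel (\<lambda>t. normal_density m s t * (a + b * t + c * t\<^sup>2))"
    and integral_normal_density_quadratic:
      "(\<integral>t. normal_density m s t * (a + b * t + c * t\<^sup>2) \<partial>lborel) = a + b * m + c * (m\<^sup>2 + s\<^sup>2)"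
proof -
  let ?n = "normal_density m s"
  have eq: "?n t * (a + b * t + c * t\<^sup>2)
      = c * (?n t * (t - m)^2) + (b + 2 * c * m) * (?n t * t) + (a - c * m\<^sup>2) * ?n t" for t
    by (simp add: algebra_simps power2_eq_square)
  have "has_bochner_integral lborel ?n 1"
    using s by (simp add: has_bochner_integral_iff)
  moreover have "has_bochner_integral lborel (\<lambda>t. ?n t * t) m"
    using integrable_normal_moment_nz_1[OF s] integral_normal_moment_nz_1[OF s]
    by (simp add: has_bochner_integral_iff)
  moreover have "has_bochner_integral lborel (\<lambda>t. ?n t * (t - m)^2) (s\<^sup>2)"
    using integrable_normal_moment[OF s, of m 2] integral_normal_moment_even[OF s, of m 1] s
    by (simp add: has_bochner_integral_iff power2_eq_square)
  ultimately have "has_bochner_integral lborel (\<lambda>t. ?n t * (a + b * t + c * t\<^sup>2))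
      (c * s\<^sup>2 + (b + 2 * c * m) * m + (a - c * m\<^sup>2) * 1)"
    unfolding eq by (intro has_bochner_integral_add has_bochner_integral_mult_right)
  then show "integrable lborel (\<lambda>t. ?n t * (a + b * t + c * t\<^sup>2))"
    and "(\<integral>t. ?n t * (a + b * t + c * t\<^sup>2) \<partial>lborel) = a + b * m + c * (m\<^sup>2 + s\<^sup>2)"
    by (auto dest: has_bochner_integral_integral_eq simp: has_bochner_integral_iff algebra_simps power2_eq_square)
qed

definition normal_ratio :: "real \<Rightarrow> real \<Rightarrow> real \<Rightarrow> real" where
  "normal_ratio m s t = normal_density m s t / std_normal_density t"

lemma borel_measurable_normal_ratio[measurable]: "normal_ratio m s \<in> borel_measurable borel"
  unfolding normal_ratio_def by measurable

lemma normal_ratio_pos: "s > 0 \<Longrightarrow> normal_ratio m s t > 0"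
  unfolding normal_ratio_def by (simp add: normal_density_pos)

lemma normal_ratio_0_1 [simp]: "normal_ratio 0 1 t = 1"
  unfolding normal_ratio_def using normal_density_pos[of 1 0 t] by simp

lemma ln_normal_ratio:
  assumes s: "s > 0"
  shows "ln (normal_ratio m s t) = (- ln s - m\<^sup>2 / (2 * s\<^sup>2)) + (m / s\<^sup>2) * t + (1/2 - 1 / (2 * s\<^sup>2)) * t\<^sup>2"
proof -
  have "sqrt (2 * pi * s\<^sup>2) = sqrt (2 * pi) * s" using s by (simp add: real_sqrt_mult)
  then have "normal_ratio m s t = (1 / s) * (exp (- (t - m)\<^sup>2 / (2 * s\<^sup>2)) / exp (- t\<^sup>2 / 2))"
    unfolding normal_ratio_def normal_density_def using s by (simp add: field_simps)
  then have "normal_ratio m s t = (1 / s) * exp (- (t - m)\<^sup>2 / (2 * s\<^sup>2) + t\<^sup>2 / 2)"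
    by (simp add: exp_diff[symmetric])
  then have "ln (normal_ratio m s t) = - ln s + (- (t - m)\<^sup>2 / (2 * s\<^sup>2) + t\<^sup>2 / 2)"
    using s by (simp add: ln_mult ln_div)
  moreover have "- ln s + (- (t - m)\<^sup>2 / (2 * s\<^sup>2) + t\<^sup>2 / 2)
      = (- ln s - m\<^sup>2 / (2 * s\<^sup>2)) + (m / s\<^sup>2) * t + (1/2 - 1 / (2 * s\<^sup>2)) * t\<^sup>2"
    using s by (simp add: field_simps power2_eq_square)
  ultimately show ?thesis by simp
qed

lemma
  assumes s: "s > 0"
  shows integrable_normal_ratio_quadratic:
      "integrable std_normal (\<lambda>t. normal_ratio m s t * (a + b * t + c * t\<^sup>2))"
    and integral_normal_ratio_quadratic:
      "(\<integral>t. normal_ratio m s t * (a + b * t + c * t\<^sup>2) \<partial>std_normal) = a + b * m + c * (m\<^sup>2 + s\<^sup>2)"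
proof -
  have eq: "std_normal_density t * (normal_ratio m s t * (a + b * t + c * t\<^sup>2))
      = normal_density m s t * (a + b * t + c * t\<^sup>2)" for t
    unfolding normal_ratio_def using normal_density_pos[of 1 0 t] by simp
  show "integrable std_normal (\<lambda>t. normal_ratio m s t * (a + b * t + c * t\<^sup>2))"
    using integrable_normal_density_quadratic[OF s] by (subst integrable_density) (simp_all add: eq)
  show "(\<integral>t. normal_ratio m s t * (a + b * t + c * t\<^sup>2) \<partial>std_normal) = a + b * m + c * (m\<^sup>2 + s\<^sup>2)"
    using integral_normal_density_quadratic[OF s] by (subst integral_density) (simp_all add: eq)
qed

text \<open>The product of the first \<open>N\<close> ratios is the density of the sequence of independent
  \<open>N(m\<^sub>i, s\<^sub>i\<^sup>2)\<close> variables (standard ones from \<open>N\<close> on) relative to \<open>std_normal_seq\<close>.\<close>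
lemma
  fixes m s :: "nat \<Rightarrow> real"
  assumes s: "\<And>i. s i > 0" and tail: "\<And>i. i \<ge> N \<Longrightarrow> m i = 0 \<and> s i = 1"
  shows integrable_prod_normal_ratio_quadratic:
      "integrable std_normal_seq
         (\<lambda>\<omega>. (\<Prod>i<N. normal_ratio (m i) (s i) (\<omega> i)) * (a + b * \<omega> k + c * (\<omega> k)\<^sup>2))"
    and integral_prod_normal_ratio_quadratic:
      "(\<integral>\<omega>. (\<Prod>i<N. normal_ratio (m i) (s i) (\<omega> i)) * (a + b * \<omega> k + c * (\<omega> k)\<^sup>2) \<partial>std_normal_seq)
         = a + b * m k + c * ((m k)\<^sup>2 + (s k)\<^sup>2)"
proof -
  define K where "K = insert k {..<N}"
  define h where "h i = (if i = k then (\<lambda>t. normal_ratio (m i) (s i) t * (a + b * t + c * t\<^sup>2))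
    else normal_ratio (m i) (s i))" for i
  have K: "finite K" "k \<in> K" unfolding K_def by simp_all
  have "(\<Prod>i<N. normal_ratio (m i) (s i) (\<omega> i)) = (\<Prod>i\<in>K. normal_ratio (m i) (s i) (\<omega> i))" for \<omega>
    using tail[of k] unfolding K_def by (cases "k < N") (simp_all add: insert_absorb)
  then have P: "(\<Prod>i\<in>K. h i (\<omega> i))
      = (\<Prod>i<N. normal_ratio (m i) (s i) (\<omega> i)) * (a + b * \<omega> k + c * (\<omega> k)\<^sup>2)" for \<omega>
    unfolding prod.remove[OF K] by (simp add: h_def)
  have hi: "integrable std_normal (h i)" for i
    using integrable_normal_ratio_quadratic[OF s[of i], of "m i" a b c]
      integrable_normal_ratio_quadratic[OF s[of i], of "m i" 1 0 0] by (cases "i = k") (simp_all add: h_def)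
  show "integrable std_normal_seq
      (\<lambda>\<omega>. (\<Prod>i<N. normal_ratio (m i) (s i) (\<omega> i)) * (a + b * \<omega> k + c * (\<omega> k)\<^sup>2))"
    using integrable_std_normal_seq_prod[of K h, OF K(1) hi] P by simp
  have "(\<integral>t. h i t \<partial>std_normal) = (if i = k then a + b * m k + c * ((m k)\<^sup>2 + (s k)\<^sup>2) else 1)" for i
    using integral_normal_ratio_quadratic[OF s[of i], of "m i" a b c]
      integral_normal_ratio_quadratic[OF s[of i], of "m i" 1 0 0] by (cases "i = k") (simp_all add: h_def)
  then show "(\<integral>\<omega>. (\<Prod>i<N. normal_ratio (m i) (s i) (\<omega> i)) * (a + b * \<omega> k + c * (\<omega> k)\<^sup>2) \<partial>std_normal_seq)
      = a + b * m k + c * ((m k)\<^sup>2 + (s k)\<^sup>2)"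
    using integral_std_normal_seq_prod[of K h, OF K(1) hi] P by (simp add: prod.remove[OF K])
qed

lemma measurable_std_normal_seq: "measurable std_normal_seq N = measurable borel N"
proof (rule measurable_cong_sets[OF _ refl])
  have "sets std_normal_seq = sets (PiM UNIV (\<lambda>_::nat. (borel :: real measure)))"
    by (rule sets_PiM_cong) auto
  then show "sets std_normal_seq = sets (borel :: (nat \<Rightarrow> real) measure)"
    by (simp add: sets_PiM_equal_borel)
qed

lemma pred_summable_sq_coordinates[measurable]:
  "Measurable.pred std_normal_seq (\<lambda>\<omega>. summable (\<lambda>k. (c k * \<omega> k)\<^sup>2))"
proof -
  have eq: "summable (\<lambda>k. (c k * \<omega> k)\<^sup>2) \<longleftrightarrow> (\<Sum>k. ennreal ((c k * \<omega> k)\<^sup>2)) \<noteq> top" for \<omega>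
  proof
    show "summable (\<lambda>k. (c k * \<omega> k)\<^sup>2) \<Longrightarrow> (\<Sum>k. ennreal ((c k * \<omega> k)\<^sup>2)) \<noteq> top"
      by (rule ennreal_suminf_neq_top) auto
    show "(\<Sum>k. ennreal ((c k * \<omega> k)\<^sup>2)) \<noteq> top \<Longrightarrow> summable (\<lambda>k. (c k * \<omega> k)\<^sup>2)"
      by (intro summable_suminf_not_top) simp_all
  qed
  show ?thesis unfolding eq by measurable
qed

lemma measurable_orthonormal_series:
  fixes f :: "nat \<Rightarrow> 'a::{real_inner,complete_space}"
  assumes on: "\<And>i j. inner (f i) (f j) = (if i = j then 1 else 0)"
  shows "(\<lambda>\<omega>. \<Sum>k. (c k * \<omega> k) *\<^sub>R f k) \<in> measurable std_normal_seq borel"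
proof -
  define Q where "Q \<omega> \<longleftrightarrow> summable (\<lambda>k. (c k * \<omega> k)\<^sup>2)" for \<omega> :: "nat \<Rightarrow> real"
  define F where "F n \<omega> = (if Q \<omega> then \<Sum>k<n. (c k * \<omega> k) *\<^sub>R f k else (THE s::'a. False))" for n \<omega>
  have "continuous_on UNIV (\<lambda>\<omega>. \<Sum>k<n. (c k * \<omega> k) *\<^sub>R f k)" for n
    by (intro continuous_intros continuous_on_compose2[OF continuous_on_product_coordinates]) auto
  then have S: "(\<lambda>\<omega>. \<Sum>k<n. (c k * \<omega> k) *\<^sub>R f k) \<in> measurable std_normal_seq borel" for n
    unfolding measurable_std_normal_seq by (rule borel_measurable_continuous_onI)
  have Q: "{\<omega> \<in> space std_normal_seq. Q \<omega>} \<in> sets std_normal_seq"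
    using pred_summable_sq_coordinates[of c] by (simp add: Measurable.pred_def Q_def)
  have Fm: "F n \<in> measurable std_normal_seq borel" for n
    unfolding F_def by (rule measurable_If[OF S measurable_const Q]) simp
  text \<open>Off the set \<open>Q\<close>, the series does not converge and \<open>suminf\<close> is the junk value \<open>THE s. False\<close>.\<close>
  have "(\<lambda>n. F n \<omega>) \<longlonglongrightarrow> (\<Sum>k. (c k * \<omega> k) *\<^sub>R f k)" for \<omega>
  proof (cases "Q \<omega>")
    case True
    then have "summable (\<lambda>k. (c k * \<omega> k) *\<^sub>R f k)" unfolding Q_def by (rule summable_orthonormal_series[OF on])
    then show ?thesis using True unfolding F_def by (simp add: summable_LIMSEQ)
  next
    case False
    have "\<not> summable (\<lambda>k. (c k * \<omega> k) *\<^sub>R f k)"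
    proof
      assume "summable (\<lambda>k. (c k * \<omega> k) *\<^sub>R f k)"
      then obtain v where "(\<lambda>k. (c k * \<omega> k) *\<^sub>R f k) sums v" by (auto simp: summable_def)
      from sums_orthonormal_norm_sq[OF on this] have "summable (\<lambda>k. (c k * \<omega> k)\<^sup>2)"
        by (rule sums_summable)
      with False show False unfolding Q_def by simp
    qed
    then have "(\<lambda>s. (\<lambda>k. (c k * \<omega> k) *\<^sub>R f k) sums s) = (\<lambda>s. False)"
      by (auto simp: summable_def)
    then show ?thesis using False unfolding F_def suminf_def by simp
  qed
  then show ?thesis by (rule borel_measurable_LIMSEQ_metric[OF Fm])
qed

lemma AE_summable_sq_coordinates:
  assumes sc: "summable (\<lambda>k. (c k)\<^sup>2)"
  shows "AE \<omega> in std_normal_seq. summable (\<lambda>k. (c k * \<omega> k)\<^sup>2)"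
proof -
  have int: "integrable std_normal_seq (\<lambda>\<omega>. (c k * \<omega> k)\<^sup>2)"
    and val: "(\<integral>\<omega>. (c k * \<omega> k)\<^sup>2 \<partial>std_normal_seq) = (c k)\<^sup>2" for k
    using integrable_prod_normal_ratio_quadratic[where m="\<lambda>_. 0" and s="\<lambda>_. 1" and N=0 and k=k
        and a=0 and b=0 and c="(c k)\<^sup>2"]
      integral_prod_normal_ratio_quadratic[where m="\<lambda>_. 0" and s="\<lambda>_. 1" and N=0 and k=k
        and a=0 and b=0 and c="(c k)\<^sup>2"]
    by (simp_all add: power_mult_distrib)
  have "(\<integral>\<^sup>+\<omega>. (\<Sum>k. ennreal ((c k * \<omega> k)\<^sup>2)) \<partial>std_normal_seq)
      = (\<Sum>k. \<integral>\<^sup>+\<omega>. ennreal ((c k * \<omega> k)\<^sup>2) \<partial>std_normal_seq)"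
    by (rule nn_integral_suminf) measurable
  also have "\<dots> = ennreal (\<Sum>k. (c k)\<^sup>2)"
    by (simp add: nn_integral_eq_integral[OF int] val suminf_ennreal2[OF _ sc])
  finally have "(\<integral>\<^sup>+\<omega>. (\<Sum>k. ennreal ((c k * \<omega> k)\<^sup>2)) \<partial>std_normal_seq) \<noteq> \<infinity>" by simp
  then have "AE \<omega> in std_normal_seq. (\<Sum>k. ennreal ((c k * \<omega> k)\<^sup>2)) \<noteq> \<infinity>"
    by (intro nn_integral_PInf_AE) measurable
  then show ?thesis
    by eventually_elim (intro summable_suminf_not_top, simp_all)
qed

lemma has_bochner_integral_suminf_AE:
  fixes h :: "nat \<Rightarrow> 'b \<Rightarrow> real"
  assumes int: "\<And>k. integrable M (h k)"
    and sums: "AE x in M. (\<lambda>k. h k x) sums g x"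
    and abs_summable: "AE x in M. summable (\<lambda>k. norm (h k x))"
    and integral_summable: "summable (\<lambda>k. \<integral>x. norm (h k x) \<partial>M)"
    and g: "g \<in> borel_measurable M"
  shows "has_bochner_integral M g (\<Sum>k. \<integral>x. h k x \<partial>M)"
proof -
  have "has_bochner_integral M (\<lambda>x. \<Sum>k. h k x) (\<Sum>k. \<integral>x. h k x \<partial>M)"
    using integrable_suminf[OF int abs_summable integral_summable]
      integral_suminf[OF int abs_summable integral_summable]
    by (simp add: has_bochner_integral_iff)
  moreover have "AE x in M. (\<Sum>k. h k x) = g x"
    using sums by eventually_elim (simp add: sums_iff)
  ultimately show ?thesis
    by (subst has_bochner_integral_cong_AE[symmetric])
      (auto simp: g has_bochner_integral_iff)
qed

text \<open>Under \<open>std_normal_seq\<close> the series \<open>\<Sum> c\<^sub>k \<omega>\<^sub>k f\<^sub>k\<close> is the reference Gaussian; reweighting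
  by \<open>tilt\<close> shifts its first \<open>N\<close> coordinates by \<open>c\<^sub>k m\<^sub>k\<close> and shrinks them by \<open>s\<^sub>k\<close>.\<close>
locale tilted_gaussian_series =
  fixes f :: "nat \<Rightarrow> 'a::{real_inner,complete_space}" and c m s :: "nat \<Rightarrow> real" and N :: nat
  assumes orthonormal: "\<And>i j. inner (f i) (f j) = (if i = j then 1 else 0)"
    and c_pos: "\<And>k. c k > 0" and summable_c_sq: "summable (\<lambda>k. (c k)\<^sup>2)"
    and s_pos: "\<And>i. s i > 0" and s_le_1: "\<And>i. s i \<le> 1"
    and tail: "\<And>i. i \<ge> N \<Longrightarrow> m i = 0 \<and> s i = 1"
begin

abbreviation tilt :: "(nat \<Rightarrow> real) \<Rightarrow> real" where
  "tilt \<omega> \<equiv> \<Prod>i<N. normal_ratio (m i) (s i) (\<omega> i)"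

abbreviation series :: "(nat \<Rightarrow> real) \<Rightarrow> 'a" where
  "series \<omega> \<equiv> \<Sum>k. (c k * \<omega> k) *\<^sub>R f k"

abbreviation centre :: 'a where
  "centre \<equiv> \<Sum>k<N. (c k * m k) *\<^sub>R f k"

lemma summable_c_sq_s_sq: "summable (\<lambda>k. (c k)\<^sup>2 * (s k)\<^sup>2)"
  using s_pos s_le_1 by (intro summable_comparison_test[OF _ summable_c_sq])
    (auto intro!: mult_left_le power_le_one simp: less_imp_le)

lemma tilt_pos: "tilt \<omega> > 0"
  by (intro prod_pos) (auto intro: normal_ratio_pos s_pos)

lemma integrable_tilt_quadratic:
    "integrable std_normal_seq (\<lambda>\<omega>. tilt \<omega> * (a + b * \<omega> k + d * (\<omega> k)\<^sup>2))"
  and integral_tilt_quadratic: "(\<integral>\<omega>. tilt \<omega> * (a + b * \<omega> k + d * (\<omega> k)\<^sup>2) \<partial>std_normal_seq)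
    = a + b * m k + d * ((m k)\<^sup>2 + (s k)\<^sup>2)"
  using integrable_prod_normal_ratio_quadratic[where m=m and s=s and N=N, OF s_pos tail]
    integral_prod_normal_ratio_quadratic[where m=m and s=s and N=N, OF s_pos tail] by auto

lemma integrable_tilt: "integrable std_normal_seq tilt"
  and integral_tilt: "(\<integral>\<omega>. tilt \<omega> \<partial>std_normal_seq) = 1"
  using integrable_tilt_quadratic[where a=1 and b=0 and d=0] integral_tilt_quadratic[where a=1 and b=0 and d=0]
  by simp_all

lemma integrable_tilt_coordinate: "integrable std_normal_seq (\<lambda>\<omega>. tilt \<omega> * (c k * (\<omega> k - m k)))"
  and integral_tilt_coordinate: "(\<integral>\<omega>. tilt \<omega> * (c k * (\<omega> k - m k)) \<partial>std_normal_seq) = 0"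
proof -
  have eq: "c k * (\<omega> k - m k) = - (c k * m k) + c k * \<omega> k + 0 * (\<omega> k)\<^sup>2" for \<omega> :: "nat \<Rightarrow> real"
    by (simp add: algebra_simps)
  show "integrable std_normal_seq (\<lambda>\<omega>. tilt \<omega> * (c k * (\<omega> k - m k)))"
    unfolding eq by (rule integrable_tilt_quadratic)
  show "(\<integral>\<omega>. tilt \<omega> * (c k * (\<omega> k - m k)) \<partial>std_normal_seq) = 0"
    unfolding eq integral_tilt_quadratic[where a="- (c k * m k)" and b="c k" and d=0] by simp
qed

lemma integrable_tilt_coordinate_sq: "integrable std_normal_seq (\<lambda>\<omega>. tilt \<omega> * (c k * (\<omega> k - m k))\<^sup>2)"
  and integral_tilt_coordinate_sq:
    "(\<integral>\<omega>. tilt \<omega> * (c k * (\<omega> k - m k))\<^sup>2 \<partial>std_normal_seq) = (c k)\<^sup>2 * (s k)\<^sup>2"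
proof -
  have eq: "(c k * (\<omega> k - m k))\<^sup>2 = (c k * m k)\<^sup>2 + (- 2 * (c k)\<^sup>2 * m k) * \<omega> k + (c k)\<^sup>2 * (\<omega> k)\<^sup>2"
    for \<omega> :: "nat \<Rightarrow> real"
    by (simp add: power2_eq_square algebra_simps)
  show "integrable std_normal_seq (\<lambda>\<omega>. tilt \<omega> * (c k * (\<omega> k - m k))\<^sup>2)"
    unfolding eq by (rule integrable_tilt_quadratic)
  show "(\<integral>\<omega>. tilt \<omega> * (c k * (\<omega> k - m k))\<^sup>2 \<partial>std_normal_seq) = (c k)\<^sup>2 * (s k)\<^sup>2"
    unfolding eq integral_tilt_quadratic[where a="(c k * m k)\<^sup>2" and b="- 2 * (c k)\<^sup>2 * m k" and d="(c k)\<^sup>2"]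
    by (simp add: power2_eq_square algebra_simps)
qed

lemma integrable_tilt_ln_tilt: "integrable std_normal_seq (\<lambda>\<omega>. tilt \<omega> * ln (tilt \<omega>))"
  and integral_tilt_ln_tilt: "(\<integral>\<omega>. tilt \<omega> * ln (tilt \<omega>) \<partial>std_normal_seq)
        = (\<Sum>j<N. - ln (s j) + ((m j)\<^sup>2 + (s j)\<^sup>2 - 1) / 2)"
proof -
  define A where "A j = - ln (s j) - (m j)\<^sup>2 / (2 * (s j)\<^sup>2)" for j
  define B where "B j = m j / (s j)\<^sup>2" for j
  define D where "D j = 1/2 - 1 / (2 * (s j)\<^sup>2)" for j
  have eq: "tilt \<omega> * ln (tilt \<omega>) = (\<Sum>j<N. tilt \<omega> * (A j + B j * \<omega> j + D j * (\<omega> j)\<^sup>2))" for \<omega>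
  proof -
    have "ln (tilt \<omega>) = (\<Sum>j<N. ln (normal_ratio (m j) (s j) (\<omega> j)))"
      using normal_ratio_pos[OF s_pos] by (intro ln_prod) (auto simp: less_imp_neq[symmetric])
    also have "\<dots> = (\<Sum>j<N. A j + B j * \<omega> j + D j * (\<omega> j)\<^sup>2)"
      by (simp add: ln_normal_ratio[OF s_pos] A_def B_def D_def)
    finally show ?thesis by (simp add: sum_distrib_left)
  qed
  show "integrable std_normal_seq (\<lambda>\<omega>. tilt \<omega> * ln (tilt \<omega>))"
    unfolding eq by (intro Bochner_Integration.integrable_sum integrable_tilt_quadratic)
  have "(\<integral>\<omega>. tilt \<omega> * ln (tilt \<omega>) \<partial>std_normal_seq) = (\<Sum>j<N. A j + B j * m j + D j * ((m j)\<^sup>2 + (s j)\<^sup>2))"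
    unfolding eq by (subst Bochner_Integration.integral_sum) (auto intro: integrable_tilt_quadratic simp: integral_tilt_quadratic)
  also have "\<dots> = (\<Sum>j<N. - ln (s j) + ((m j)\<^sup>2 + (s j)\<^sup>2 - 1) / 2)"
    using s_pos[THEN less_imp_neq] by (intro sum.cong refl) (simp add: A_def B_def D_def field_simps power2_eq_square)
  finally show "(\<integral>\<omega>. tilt \<omega> * ln (tilt \<omega>) \<partial>std_normal_seq) = (\<Sum>j<N. - ln (s j) + ((m j)\<^sup>2 + (s j)\<^sup>2 - 1) / 2)" .
qed

lemma measurable_series[measurable]: "series \<in> measurable std_normal_seq borel"
  by (rule measurable_orthonormal_series[OF orthonormal])

lemma measurable_norm_series_diff[measurable]:
  "(\<lambda>\<omega>. norm (series \<omega> - v)) \<in> borel_measurable std_normal_seq"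
  by (rule measurable_compose[OF measurable_series borel_measurable_continuous_onI])
    (intro continuous_intros)

lemma measurable_inner_series_diff[measurable]:
  "(\<lambda>\<omega>. inner u (series \<omega> - v)) \<in> borel_measurable std_normal_seq"
  by (rule measurable_compose[OF measurable_series borel_measurable_continuous_onI])
    (intro continuous_intros)

lemma sums_series_minus_centre:
  assumes "summable (\<lambda>k. (c k * \<omega> k)\<^sup>2)"
  shows "(\<lambda>k. (c k * (\<omega> k - m k)) *\<^sub>R f k) sums (series \<omega> - centre)"
proof -
  have "(\<lambda>k. (c k * \<omega> k) *\<^sub>R f k) sums series \<omega>"
    using summable_orthonormal_series[OF orthonormal assms] by (rule summable_sums)
  moreover have "(\<lambda>k. (c k * m k) *\<^sub>R f k) sums centre"
    by (rule sums_finite) (auto simp: tail)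
  ultimately have "(\<lambda>k. (c k * \<omega> k) *\<^sub>R f k - (c k * m k) *\<^sub>R f k) sums (series \<omega> - centre)"
    by (rule sums_diff)
  then show ?thesis by (simp add: right_diff_distrib scaleR_diff_left)
qed

lemma
  shows integrable_tilt_norm_sq: "integrable std_normal_seq (\<lambda>\<omega>. tilt \<omega> * (norm (series \<omega> - centre))\<^sup>2)"
    and integral_tilt_norm_sq:
      "(\<integral>\<omega>. tilt \<omega> * (norm (series \<omega> - centre))\<^sup>2 \<partial>std_normal_seq) = (\<Sum>k. (c k)\<^sup>2 * (s k)\<^sup>2)"
proof -
  let ?h = "\<lambda>k \<omega>. tilt \<omega> * (c k * (\<omega> k - m k))\<^sup>2"
  have AE_sums: "AE \<omega> in std_normal_seq. (\<lambda>k. ?h k \<omega>) sums (tilt \<omega> * (norm (series \<omega> - centre))\<^sup>2)"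
    using AE_summable_sq_coordinates[OF summable_c_sq]
    by eventually_elim (rule sums_mult[OF sums_orthonormal_norm_sq[OF orthonormal sums_series_minus_centre]])
  have h_nonneg: "?h k \<omega> \<ge> 0" for k \<omega> using tilt_pos[of \<omega>] by simp
  have integral_summable: "summable (\<lambda>k. \<integral>\<omega>. norm (?h k \<omega>) \<partial>std_normal_seq)"
    using summable_c_sq_s_sq h_nonneg by (simp add: integral_tilt_coordinate_sq)
  have abs_summable: "AE \<omega> in std_normal_seq. summable (\<lambda>k. norm (?h k \<omega>))"
    using AE_sums by eventually_elim (use h_nonneg in \<open>auto simp: sums_iff\<close>)
  have "has_bochner_integral std_normal_seq (\<lambda>\<omega>. tilt \<omega> * (norm (series \<omega> - centre))\<^sup>2)
      (\<Sum>k. \<integral>\<omega>. ?h k \<omega> \<partial>std_normal_seq)"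
    by (rule has_bochner_integral_suminf_AE[OF integrable_tilt_coordinate_sq AE_sums abs_summable
        integral_summable]) measurable
  then show "integrable std_normal_seq (\<lambda>\<omega>. tilt \<omega> * (norm (series \<omega> - centre))\<^sup>2)"
    and "(\<integral>\<omega>. tilt \<omega> * (norm (series \<omega> - centre))\<^sup>2 \<partial>std_normal_seq) = (\<Sum>k. (c k)\<^sup>2 * (s k)\<^sup>2)"
    by (auto simp: has_bochner_integral_iff integral_tilt_coordinate_sq)
qed

lemma integral_abs_tilt_coordinate_le:
  "(\<integral>\<omega>. \<bar>tilt \<omega> * (c k * (\<omega> k - m k))\<bar> \<partial>std_normal_seq) \<le> c k"
proof -
  let ?y = "\<lambda>\<omega>. c k * (\<omega> k - m k)"
  have ck: "c k > 0" by (rule c_pos)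
  have "\<bar>tilt \<omega> * ?y \<omega>\<bar> \<le> (c k * tilt \<omega> + tilt \<omega> * (?y \<omega>)\<^sup>2 / c k) / 2" for \<omega>
  proof -
    have "0 \<le> (\<bar>?y \<omega>\<bar> - c k)\<^sup>2" by simp
    then have "\<bar>?y \<omega>\<bar> \<le> (c k + (?y \<omega>)\<^sup>2 / c k) / 2"
      using ck by (simp add: field_simps power2_eq_square)
    then have "tilt \<omega> * \<bar>?y \<omega>\<bar> \<le> tilt \<omega> * ((c k + (?y \<omega>)\<^sup>2 / c k) / 2)"
      using tilt_pos[of \<omega>] by (intro mult_left_mono) auto
    moreover have "\<bar>tilt \<omega> * ?y \<omega>\<bar> = tilt \<omega> * \<bar>?y \<omega>\<bar>"
      using tilt_pos[of \<omega>] by (simp add: abs_mult)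
    moreover have "tilt \<omega> * ((c k + (?y \<omega>)\<^sup>2 / c k) / 2) = (c k * tilt \<omega> + tilt \<omega> * (?y \<omega>)\<^sup>2 / c k) / 2"
      by (simp add: field_simps)
    ultimately show ?thesis by linarith
  qed
  then have "(\<integral>\<omega>. \<bar>tilt \<omega> * ?y \<omega>\<bar> \<partial>std_normal_seq)
      \<le> (\<integral>\<omega>. (c k * tilt \<omega> + tilt \<omega> * (?y \<omega>)\<^sup>2 / c k) / 2 \<partial>std_normal_seq)"
    using integrable_tilt_coordinate integrable_tilt integrable_tilt_coordinate_sq
    by (intro integral_mono) auto
  also have "\<dots> = (c k + (c k)\<^sup>2 * (s k)\<^sup>2 / c k) / 2"
    using integrable_tilt integrable_tilt_coordinate_sq
    by (simp add: integral_tilt integral_tilt_coordinate_sq)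
  also have "\<dots> \<le> c k"
    using ck s_pos[of k] s_le_1[of k] power_le_one[of "s k" 2]
    by (simp add: power2_eq_square field_simps mult_left_le)
  finally show ?thesis .
qed

lemma
  shows integrable_tilt_inner: "integrable std_normal_seq (\<lambda>\<omega>. tilt \<omega> * inner u (series \<omega> - centre))"
    and integral_tilt_inner: "(\<integral>\<omega>. tilt \<omega> * inner u (series \<omega> - centre) \<partial>std_normal_seq) = 0"
proof -
  let ?g = "\<lambda>k. inner u (f k)"
  let ?y = "\<lambda>k \<omega>. c k * (\<omega> k - m k)"
  let ?h = "\<lambda>k \<omega>. tilt \<omega> * ?y k \<omega> * ?g k"
  have sg: "summable (\<lambda>k. (?g k)\<^sup>2)" by (rule summable_inner_sq_orthonormal[OF orthonormal])
  have AE_sums: "AE \<omega> in std_normal_seq. (\<lambda>k. ?h k \<omega>) sums (tilt \<omega> * inner u (series \<omega> - centre))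
      \<and> summable (\<lambda>k. (?y k \<omega>)\<^sup>2)"
    using AE_summable_sq_coordinates[OF summable_c_sq]
  proof eventually_elim
    case (elim \<omega>)
    note sums = sums_series_minus_centre[OF elim]
    have "(\<lambda>k. tilt \<omega> * (?y k \<omega> * ?g k)) sums (tilt \<omega> * inner u (series \<omega> - centre))"
      by (rule sums_mult[OF sums_inner_right[OF sums]])
    moreover have "summable (\<lambda>k. (?y k \<omega>)\<^sup>2)"
      using sums_orthonormal_norm_sq[OF orthonormal sums] by (rule sums_summable)
    ultimately show ?case by (simp add: mult.assoc)
  qed
  have abs_summable: "AE \<omega> in std_normal_seq. summable (\<lambda>k. norm (?h k \<omega>))"
    using AE_sums
  proof eventually_elim
    case (elim \<omega>)
    then have "summable (\<lambda>k. tilt \<omega> * \<bar>?y k \<omega> * ?g k\<bar>)"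
      using sg by (intro summable_mult summable_abs_mult_of_summable_sq) auto
    then show ?case using tilt_pos[of \<omega>] by (simp add: abs_mult mult.assoc)
  qed
  have "norm (\<integral>\<omega>. norm (?h k \<omega>) \<partial>std_normal_seq) \<le> \<bar>?g k * c k\<bar>" for k
  proof -
    have "norm (\<integral>\<omega>. norm (?h k \<omega>) \<partial>std_normal_seq)
        = \<bar>?g k\<bar> * (\<integral>\<omega>. \<bar>tilt \<omega> * ?y k \<omega>\<bar> \<partial>std_normal_seq)"
      by (simp add: abs_mult mult.commute integral_nonneg_AE)
    also have "\<dots> \<le> \<bar>?g k\<bar> * c k"
      by (rule mult_left_mono[OF integral_abs_tilt_coordinate_le]) simp
    finally show ?thesis using c_pos[of k] by (simp add: abs_mult)
  qed
  then have integral_summable: "summable (\<lambda>k. \<integral>\<omega>. norm (?h k \<omega>) \<partial>std_normal_seq)"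
    by (intro summable_comparison_test'[OF summable_abs_mult_of_summable_sq[OF sg summable_c_sq]])
  have int: "integrable std_normal_seq (?h k)" for k
    using integrable_tilt_coordinate[of k] by simp
  have sums: "AE \<omega> in std_normal_seq. (\<lambda>k. ?h k \<omega>) sums (tilt \<omega> * inner u (series \<omega> - centre))"
    using AE_sums by simp
  have "has_bochner_integral std_normal_seq (\<lambda>\<omega>. tilt \<omega> * inner u (series \<omega> - centre))
      (\<Sum>k. \<integral>\<omega>. ?h k \<omega> \<partial>std_normal_seq)"
    by (rule has_bochner_integral_suminf_AE[OF int sums abs_summable integral_summable]) measurable
  then show "integrable std_normal_seq (\<lambda>\<omega>. tilt \<omega> * inner u (series \<omega> - centre))"
    and "(\<integral>\<omega>. tilt \<omega> * inner u (series \<omega> - centre) \<partial>std_normal_seq) = 0"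
    by (auto simp: has_bochner_integral_iff integral_tilt_coordinate)
qed

lemma suminf_sq_scales_split:
  "(\<Sum>k. (c k)\<^sup>2 * (s k)\<^sup>2) = (\<Sum>n. (c (n + N))\<^sup>2) + (\<Sum>k<N. (c k)\<^sup>2 * (s k)\<^sup>2)"
  using suminf_split_initial_segment[OF summable_c_sq_s_sq, of N] by (simp add: tail)

lemma
  fixes L0 M :: real and u :: 'a
  defines "q \<equiv> \<lambda>\<omega>. L0 + inner u (series \<omega> - centre) + M / 2 * (norm (series \<omega> - centre))\<^sup>2"
  shows integrable_tilt_paraboloid: "integrable std_normal_seq (\<lambda>\<omega>. tilt \<omega> * q \<omega>)"
    and integral_tilt_paraboloid:
      "(\<integral>\<omega>. tilt \<omega> * q \<omega> \<partial>std_normal_seq) = L0 + M / 2 * (\<Sum>k. (c k)\<^sup>2 * (s k)\<^sup>2)"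
proof -
  have eq: "tilt \<omega> * q \<omega> = L0 * tilt \<omega> + tilt \<omega> * inner u (series \<omega> - centre)
      + M / 2 * (tilt \<omega> * (norm (series \<omega> - centre))\<^sup>2)" for \<omega>
    unfolding q_def by (simp add: algebra_simps)
  show "integrable std_normal_seq (\<lambda>\<omega>. tilt \<omega> * q \<omega>)"
    unfolding eq using integrable_tilt integrable_tilt_inner integrable_tilt_norm_sq by auto
  show "(\<integral>\<omega>. tilt \<omega> * q \<omega> \<partial>std_normal_seq) = L0 + M / 2 * (\<Sum>k. (c k)\<^sup>2 * (s k)\<^sup>2)"
    unfolding eq using integrable_tilt integrable_tilt_inner integrable_tilt_norm_sq
    by (simp add: integral_tilt integral_tilt_inner integral_tilt_norm_sq)
qed

lemma free_energy_tilt_paraboloid: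
  fixes L0 M \<beta> :: real and u :: 'a
  shows "(\<integral>\<omega>. tilt \<omega> * (L0 + inner u (series \<omega> - centre) + M / 2 * (norm (series \<omega> - centre))\<^sup>2)
      \<partial>std_normal_seq) + 1 / \<beta> * (\<integral>\<omega>. tilt \<omega> * ln (tilt \<omega>) \<partial>std_normal_seq)
    = L0 + M / 2 * (\<Sum>n. (c (n + N))\<^sup>2)
      + (\<Sum>k<N. M / 2 * ((c k)\<^sup>2 * (s k)\<^sup>2) + 1 / \<beta> * (- ln (s k) + ((m k)\<^sup>2 + (s k)\<^sup>2 - 1) / 2))"
  unfolding integral_tilt_paraboloid integral_tilt_ln_tilt suminf_sq_scales_split
  by (simp add: sum.distrib sum_distrib_left distrib_left add_ac)

lemma gibbs_mean_le_free_energy_tilt: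
  fixes L :: "'a \<Rightarrow> real" and \<beta> M :: real
  assumes b: "\<beta> > 0"
    and der: "\<And>x. (L has_derivative (\<lambda>h. inner (gradL x) h)) (at x)"
    and lip: "M-lipschitz_on UNIV gradL"
    and iW: "integrable std_normal_seq (\<lambda>\<omega>. exp (- \<beta> * L (series \<omega>)))"
    and iWL: "integrable std_normal_seq (\<lambda>\<omega>. exp (- \<beta> * L (series \<omega>))
      / (\<integral>y. exp (- \<beta> * L (series y)) \<partial>std_normal_seq) * L (series \<omega>))"
  shows "(\<integral>\<omega>. exp (- \<beta> * L (series \<omega>)) / (\<integral>y. exp (- \<beta> * L (series y)) \<partial>std_normal_seq)
      * L (series \<omega>) \<partial>std_normal_seq)
    \<le> L centre + M / 2 * (\<Sum>n. (c (n + N))\<^sup>2)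
      + (\<Sum>k<N. M / 2 * ((c k)\<^sup>2 * (s k)\<^sup>2) + 1 / \<beta> * (- ln (s k) + ((m k)\<^sup>2 + (s k)\<^sup>2 - 1) / 2))"
proof -
  let ?q = "\<lambda>\<omega>. L centre + inner (gradL centre) (series \<omega> - centre) + M / 2 * (norm (series \<omega> - centre))\<^sup>2"
  have "(\<integral>\<omega>. exp (- \<beta> * L (series \<omega>)) / (\<integral>y. exp (- \<beta> * L (series y)) \<partial>std_normal_seq)
      * L (series \<omega>) \<partial>std_normal_seq)
    \<le> (\<integral>\<omega>. tilt \<omega> * ?q \<omega> \<partial>std_normal_seq) + 1 / \<beta> * (\<integral>\<omega>. tilt \<omega> * ln (tilt \<omega>) \<partial>std_normal_seq)"
  proof (rule gibbs_variational_inequality[OF prob_space_std_normal_seq b iW iWL])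
    show "L (series \<omega>) \<le> ?q \<omega>" for \<omega>
      using lipschitz_gradient_upper_bound[OF der lip] .
  qed (use tilt_pos integrable_tilt integral_tilt integrable_tilt_paraboloid integrable_tilt_ln_tilt in auto)
  also have "\<dots> = L centre + M / 2 * (\<Sum>n. (c (n + N))\<^sup>2)
      + (\<Sum>k<N. M / 2 * ((c k)\<^sup>2 * (s k)\<^sup>2) + 1 / \<beta> * (- ln (s k) + ((m k)\<^sup>2 + (s k)\<^sup>2 - 1) / 2))"
    by (rule free_energy_tilt_paraboloid)
  finally show ?thesis .
qed

end

section \<open>The Gibbs mean under a Lipschitz gradient\<close>

lemma suminf_tail_tendsto_zero:
  fixes g :: "nat \<Rightarrow> real"
  assumes "summable g"
  shows "(\<lambda>N. \<Sum>n. g (n + N)) \<longlonglongrightarrow> 0"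
proof -
  have "(\<lambda>N. (\<Sum>k. g k) - (\<Sum>k<N. g k)) \<longlonglongrightarrow> (\<Sum>k. g k) - (\<Sum>k. g k)"
    by (intro tendsto_intros summable_LIMSEQ[OF assms])
  moreover have "(\<Sum>n. g (n + N)) = (\<Sum>k. g k) - (\<Sum>k<N. g k)" for N
    using suminf_split_initial_segment[OF assms, of N] by simp
  ultimately show ?thesis by simp
qed

lemma
  fixes f :: "nat \<Rightarrow> 'a::{real_inner,complete_space}" and L :: "'a \<Rightarrow> real"
  assumes on: "\<And>i j. inner (f i) (f j) = (if i = j then 1 else 0)"
    and [measurable]: "L \<in> borel_measurable borel"
    and iW: "integrable (gauss_ref \<mu> f lam \<beta>) (\<lambda>x. exp (- \<beta> * L x))"
    and iL: "integrable (gibbs \<mu> f lam \<beta> L) L"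
  defines "V \<equiv> \<lambda>\<omega>. L (\<Sum>k. (sqrt (\<mu> k / (\<beta> * lam)) * \<omega> k) *\<^sub>R f k)"
  shows integrable_exp_std_normal_seq: "integrable std_normal_seq (\<lambda>\<omega>. exp (- \<beta> * V \<omega>))"
    and integrable_gibbs_std_normal_seq: "integrable std_normal_seq
      (\<lambda>\<omega>. exp (- \<beta> * V \<omega>) / (\<integral>y. exp (- \<beta> * V y) \<partial>std_normal_seq) * V \<omega>)"
    and integral_gibbs_std_normal_seq: "(\<integral>x. L x \<partial>gibbs \<mu> f lam \<beta> L)
      = (\<integral>\<omega>. exp (- \<beta> * V \<omega>) / (\<integral>y. exp (- \<beta> * V y) \<partial>std_normal_seq) * V \<omega> \<partial>std_normal_seq)"
proof -
  let ?\<Phi> = "\<lambda>\<omega>. \<Sum>k. (sqrt (\<mu> k / (\<beta> * lam)) * \<omega> k) *\<^sub>R f k"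
  have \<Phi>[measurable]: "?\<Phi> \<in> measurable std_normal_seq borel"
    by (rule measurable_orthonormal_series[OF on])
  have gauss: "gauss_ref \<mu> f lam \<beta> = distr std_normal_seq borel ?\<Phi>"
    unfolding gauss_ref_def ..
  define Z where "Z = (\<integral>\<omega>. exp (- \<beta> * V \<omega>) \<partial>std_normal_seq)"
  have "(\<integral>y. exp (- \<beta> * L y) \<partial>gauss_ref \<mu> f lam \<beta>) = Z"
    unfolding gauss Z_def V_def by (rule integral_distr[OF \<Phi>]) measurable
  then have gibbs: "gibbs \<mu> f lam \<beta> L = density (gauss_ref \<mu> f lam \<beta>) (\<lambda>x. exp (- \<beta> * L x) / Z)"
    unfolding gibbs_def by simp
  have Z0: "Z \<ge> 0" unfolding Z_def by (rule integral_nonneg_AE) simp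
  show "integrable std_normal_seq (\<lambda>\<omega>. exp (- \<beta> * V \<omega>))"
    using iW unfolding gauss V_def by (subst (asm) integrable_distr_eq[OF \<Phi>]) measurable
  have "integrable (gauss_ref \<mu> f lam \<beta>) (\<lambda>x. exp (- \<beta> * L x) / Z * L x)"
    using iL Z0 unfolding gibbs by (subst (asm) integrable_density) (auto simp: gauss)
  then show "integrable std_normal_seq (\<lambda>\<omega>. exp (- \<beta> * V \<omega>) / (\<integral>y. exp (- \<beta> * V y) \<partial>std_normal_seq) * V \<omega>)"
    unfolding gauss V_def Z_def by (subst (asm) integrable_distr_eq[OF \<Phi>]) measurable
  have "(\<integral>x. L x \<partial>gibbs \<mu> f lam \<beta> L) = (\<integral>x. exp (- \<beta> * L x) / Z * L x \<partial>gauss_ref \<mu> f lam \<beta>)"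
    unfolding gibbs using Z0 by (subst integral_density) (auto simp: gauss)
  also have "\<dots> = (\<integral>\<omega>. exp (- \<beta> * V \<omega>) / Z * V \<omega> \<partial>std_normal_seq)"
    unfolding gauss V_def by (rule integral_distr[OF \<Phi>]) measurable
  finally show "(\<integral>x. L x \<partial>gibbs \<mu> f lam \<beta> L)
      = (\<integral>\<omega>. exp (- \<beta> * V \<omega>) / (\<integral>y. exp (- \<beta> * V y) \<partial>std_normal_seq) * V \<omega> \<partial>std_normal_seq)"
    unfolding Z_def .
qed

text \<open>Per coordinate, the shrinkage \<open>s = (1 + a)\<^sup>-\<^sup>1\<^sup>/\<^sup>2\<close> balances the curvature term against the
  entropy term, leaving \<open>ln (1 + a) / (2 \<beta>)\<close>; the mean shift costs exactly the RKHS penalty.\<close>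
lemma gaussian_shrinkage_cost:
  fixes \<mu> lam \<beta> M x :: real
  assumes mu: "\<mu> > 0" and lam: "lam > 0" and b: "\<beta> > 0" and M: "M \<ge> 0"
  defines "a \<equiv> M * \<mu> / lam" and "c \<equiv> sqrt (\<mu> / (\<beta> * lam))"
  defines "s \<equiv> 1 / sqrt (1 + a)"
  shows "M / 2 * (c\<^sup>2 * s\<^sup>2) + 1 / \<beta> * (- ln s + ((x / c)\<^sup>2 + s\<^sup>2 - 1) / 2)
    = ln (1 + a) / (2 * \<beta>) + lam / 2 * (x\<^sup>2 / \<mu>)"
proof -
  have "a \<ge> 0" unfolding a_def using mu lam M by simp
  then have a: "1 + a > 0" by linarith
  have s2: "s\<^sup>2 = 1 / (1 + a)" unfolding s_def using a by (simp add: power_divide)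
  have lns: "ln s = - ln (1 + a) / 2" unfolding s_def using a by (simp add: ln_div ln_sqrt)
  have c2: "c\<^sup>2 = \<mu> / (\<beta> * lam)" unfolding c_def using mu lam b by simp
  have Mc: "M / 2 * (c\<^sup>2 * s\<^sup>2) = a / (2 * \<beta>) * s\<^sup>2"
    unfolding c2 a_def using lam b by (simp add: field_simps)
  have xc: "(x / c)\<^sup>2 = x\<^sup>2 * (\<beta> * lam) / \<mu>"
    unfolding power_divide c2 using mu lam b by (simp add: field_simps)
  have "M / 2 * (c\<^sup>2 * s\<^sup>2) + 1 / \<beta> * (- ln s + ((x / c)\<^sup>2 + s\<^sup>2 - 1) / 2)
      = (a * s\<^sup>2 + s\<^sup>2 - 1) / (2 * \<beta>) + ln (1 + a) / (2 * \<beta>) + lam / 2 * (x\<^sup>2 / \<mu>)"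
    unfolding Mc xc lns using mu lam b by (simp add: field_simps)
  moreover have "a * s\<^sup>2 + s\<^sup>2 - 1 = 0" unfolding s2 using a by (simp add: field_simps)
  ultimately show ?thesis by simp
qed

lemma gibbs_mean_le_truncation:
  fixes f :: "nat \<Rightarrow> 'a::{real_inner,complete_space}" and \<mu> :: "nat \<Rightarrow> real"
  assumes on: "\<And>i j. inner (f i) (f j) = (if i = j then 1 else 0)"
    and mu_pos: "\<And>k. \<mu> k > 0" and summable_mu: "summable \<mu>"
    and lam: "lam > 0" and b: "\<beta> > 0"
    and der: "\<And>x. (L has_derivative (\<lambda>h. inner (gradL x) h)) (at x)"
    and lip: "M-lipschitz_on UNIV gradL"
    and in_HK: "in_HK \<mu> f xt"
    and iW: "integrable (gauss_ref \<mu> f lam \<beta>) (\<lambda>x. exp (- \<beta> * L x))"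
    and iL: "integrable (gibbs \<mu> f lam \<beta> L) L"
    and summable_ln: "summable (\<lambda>k. ln (1 + M * \<mu> k / lam))"
  shows "(\<integral>x. L x \<partial>gibbs \<mu> f lam \<beta> L)
    \<le> L (\<Sum>k<N. inner xt (f k) *\<^sub>R f k) + M / 2 * (\<Sum>n. \<mu> (n + N) / (\<beta> * lam))
       + (\<Sum>k. ln (1 + M * \<mu> k / lam)) / (2 * \<beta>) + lam / 2 * (HK_norm \<mu> f xt)\<^sup>2"
proof -
  have M0: "M \<ge> 0" using lip by (rule lipschitz_on_nonneg)
  have "continuous_on UNIV L"
    using der by (auto intro!: continuous_at_imp_continuous_on has_derivative_continuous)
  then have L_meas: "L \<in> borel_measurable borel" by (rule borel_measurable_continuous_onI)
  define c where "c k = sqrt (\<mu> k / (\<beta> * lam))" for k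
  have c_sq: "(c k)\<^sup>2 = \<mu> k / (\<beta> * lam)" for k unfolding c_def using mu_pos[of k] lam b by simp
  define a where "a k = M * \<mu> k / lam" for k
  define s where "s k = 1 / sqrt (1 + a k)" for k
  have a0: "a k \<ge> 0" for k unfolding a_def using M0 mu_pos[of k] lam by simp
  define x where "x k = inner xt (f k)" for k
  define v where "v = (\<Sum>k<N. x k *\<^sub>R f k)"
  interpret tilted_gaussian_series f c "\<lambda>k. if k < N then x k / c k else 0"
    "\<lambda>k. if k < N then s k else 1" N
  proof
    show "c k > 0" for k unfolding c_def using mu_pos[of k] lam b by simp
    show "summable (\<lambda>k. (c k)\<^sup>2)" unfolding c_sq using summable_mu by (simp add: summable_divide)
    show "(if i < N then s i else 1) > 0" "(if i < N then s i else 1) \<le> 1" for i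
      unfolding s_def using a0[of i] by auto
  qed (use on in auto)
  have centre: "centre = v"
    unfolding v_def using c_pos by (intro sum.cong) (auto simp: less_imp_neq[symmetric])
  have "(\<integral>x. L x \<partial>gibbs \<mu> f lam \<beta> L) \<le> L v + M / 2 * (\<Sum>n. \<mu> (n + N) / (\<beta> * lam))
      + (\<Sum>k<N. M / 2 * ((c k)\<^sup>2 * (s k)\<^sup>2) + 1 / \<beta> * (- ln (s k) + ((x k / c k)\<^sup>2 + (s k)\<^sup>2 - 1) / 2))"
    using gibbs_mean_le_free_energy_tilt[OF b der lip]
      integrable_exp_std_normal_seq[OF on L_meas iW iL] integrable_gibbs_std_normal_seq[OF on L_meas iW iL]
    unfolding integral_gibbs_std_normal_seq[OF on L_meas iW iL] c_def[symmetric] centre c_sq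
    by simp
  also have "\<dots> = L v + M / 2 * (\<Sum>n. \<mu> (n + N) / (\<beta> * lam))
      + ((\<Sum>k<N. ln (1 + a k)) / (2 * \<beta>) + lam / 2 * (\<Sum>k<N. (x k)\<^sup>2 / \<mu> k))"
    using gaussian_shrinkage_cost[OF mu_pos lam b M0]
    by (simp add: a_def c_def s_def sum.distrib sum_distrib_left sum_divide_distrib)
  also have "\<dots> \<le> L v + M / 2 * (\<Sum>n. \<mu> (n + N) / (\<beta> * lam))
      + ((\<Sum>k. ln (1 + a k)) / (2 * \<beta>) + lam / 2 * (HK_norm \<mu> f xt)\<^sup>2)"
  proof -
    have "(\<Sum>k<N. ln (1 + a k)) \<le> (\<Sum>k. ln (1 + a k))"
      using summable_ln a0 unfolding a_def by (intro sum_le_suminf) auto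
    moreover have "(\<Sum>k<N. (x k)\<^sup>2 / \<mu> k) \<le> (HK_norm \<mu> f xt)\<^sup>2"
      unfolding x_def using mu_pos in_HK by (rule sum_inner_sq_div_le_HK_norm_sq)
    ultimately show ?thesis using b lam by (intro add_left_mono add_mono divide_right_mono mult_left_mono) auto
  qed
  finally show ?thesis unfolding v_def x_def a_def by (simp add: add_ac)
qed

lemma gibbs_mean_le:
  fixes f :: "nat \<Rightarrow> 'a::{real_inner,complete_space}" and \<mu> :: "nat \<Rightarrow> real"
  assumes onb: "orthonormal_basis f"
    and mu_pos: "\<And>k. \<mu> k > 0" and summable_mu: "summable \<mu>"
    and lam: "lam > 0" and b: "\<beta> > 0"
    and der: "\<And>x. (L has_derivative (\<lambda>h. inner (gradL x) h)) (at x)"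
    and lip: "M-lipschitz_on UNIV gradL"
    and in_HK: "in_HK \<mu> f xt"
    and iW: "integrable (gauss_ref \<mu> f lam \<beta>) (\<lambda>x. exp (- \<beta> * L x))"
    and iL: "integrable (gibbs \<mu> f lam \<beta> L) L"
    and summable_ln: "summable (\<lambda>k. ln (1 + M * \<mu> k / lam))"
  shows "(\<integral>x. L x \<partial>gibbs \<mu> f lam \<beta> L)
    \<le> L xt + (\<Sum>k. ln (1 + M * \<mu> k / lam)) / (2 * \<beta>) + lam / 2 * (HK_norm \<mu> f xt)\<^sup>2"
proof -
  have on: "\<And>i j. inner (f i) (f j) = (if i = j then 1 else 0)"
    using onb by (simp add: orthonormal_basis_def)
  have "isCont L xt" using der has_derivative_continuous by blast
  then have "(\<lambda>N. L (\<Sum>k<N. inner xt (f k) *\<^sub>R f k)) \<longlonglongrightarrow> L xt"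
    using orthonormal_basis_sums[OF onb, of xt] unfolding sums_def
    by (rule isCont_tendsto_compose)
  moreover have "(\<lambda>N. \<Sum>n. \<mu> (n + N) / (\<beta> * lam)) \<longlonglongrightarrow> 0"
    using summable_mu by (intro suminf_tail_tendsto_zero summable_divide)
  ultimately have "(\<lambda>N. L (\<Sum>k<N. inner xt (f k) *\<^sub>R f k) + M / 2 * (\<Sum>n. \<mu> (n + N) / (\<beta> * lam))
        + (\<Sum>k. ln (1 + M * \<mu> k / lam)) / (2 * \<beta>) + lam / 2 * (HK_norm \<mu> f xt)\<^sup>2)
      \<longlonglongrightarrow> L xt + M / 2 * 0 + (\<Sum>k. ln (1 + M * \<mu> k / lam)) / (2 * \<beta>) + lam / 2 * (HK_norm \<mu> f xt)\<^sup>2"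
    by (intro tendsto_intros)
  then show ?thesis
    using gibbs_mean_le_truncation[OF on mu_pos summable_mu lam b der lip in_HK iW iL summable_ln]
    by (intro LIMSEQ_le_const) auto
qed

section \<open>The log-determinant sum under quadratic eigenvalue decay\<close>

lemma sum_inverse_sqrt_le: "(\<Sum>k<K. 1 / sqrt (real k + 1)) \<le> 2 * sqrt (real K)"
proof (induction K)
  case 0 then show ?case by simp
next
  case (Suc K)
  have "sqrt (real K) * sqrt (real K + 1) \<le> sqrt ((real K + 1/2)\<^sup>2)"
    unfolding real_sqrt_mult[symmetric]
    by (intro real_sqrt_le_mono) (simp add: power2_eq_square algebra_simps)
  also have "\<dots> = real K + 1/2" by simp
  finally have "1 / sqrt (real K + 1) \<le> 2 * sqrt (real K + 1) - 2 * sqrt (real K)"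
    by (simp add: field_simps)
  then show ?case using Suc by (simp add: add.commute)
qed

lemma sum_inverse_sq_tail_le:
  assumes "1 \<le> K" "K \<le> n"
  shows "(\<Sum>k\<in>{K..<n}. 1 / (real k + 1)\<^sup>2) \<le> 1 / real K"
proof -
  have "(\<Sum>k\<in>{K..<n}. 1 / (real k + 1)\<^sup>2) \<le> (\<Sum>k\<in>{K..<n}. 1 / real k - 1 / (real k + 1))"
  proof (rule sum_mono)
    fix k assume "k \<in> {K..<n}"
    then have k: "real k \<ge> 1" using assms by auto
    have "1 / (real k + 1)\<^sup>2 \<le> 1 / (real k * (real k + 1))"
      using k by (intro divide_left_mono) (auto simp: power2_eq_square)
    also have "\<dots> = 1 / real k - 1 / (real k + 1)" using k by (simp add: field_simps)
    finally show "1 / (real k + 1)\<^sup>2 \<le> 1 / real k - 1 / (real k + 1)" .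
  qed
  also have "\<dots> = 1 / real K - 1 / real n"
    using assms(2) by (induction n rule: dec_induct) (simp_all add: add.commute)
  also have "\<dots> \<le> 1 / real K" by simp
  finally show ?thesis .
qed

lemma ln_one_plus_sq_le:
  assumes y: "y \<ge> 0"
  shows "ln (1 + y\<^sup>2) \<le> 4 * sqrt y"
proof -
  have "ln (1 + y\<^sup>2) \<le> ln ((1 + y)\<^sup>2)"
    using y by (subst ln_le_cancel_iff) (auto simp: power2_eq_square algebra_simps add_pos_nonneg)
  also have "\<dots> = 4 * ln (sqrt (1 + y))" using y by (simp add: ln_realpow ln_sqrt)
  also have "ln (sqrt (1 + y)) \<le> sqrt (1 + y) - 1" using y by (intro ln_le_minus_one) simp
  also have "sqrt (1 + y) \<le> 1 + sqrt y"
    using y by (intro real_le_lsqrt) (auto simp: power2_eq_square algebra_simps)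
  finally show ?thesis by simp
qed

text \<open>Split at \<open>K = \<lceil>\<surd>b\<rceil>\<close>: below \<open>K\<close> use \<open>ln (1 + y\<^sup>2) \<le> 4 \<surd>y\<close>, above it \<open>ln (1 + y) \<le> y\<close>.\<close>
lemma sum_ln_one_plus_le:
  fixes a :: "nat \<Rightarrow> real"
  assumes b: "b \<ge> 0" and a0: "\<And>k. 0 \<le> a k" and ab: "\<And>k. a k \<le> b / (real k + 1)\<^sup>2"
  shows "(\<Sum>k<n. ln (1 + a k)) \<le> 9 * (sqrt b + 1)"
proof (cases "b = 0")
  case True
  then have "a k = 0" for k using a0[of k] ab[of k] by simp
  then show ?thesis using b by simp
next
  case False
  define r where "r = sqrt b"
  have r: "r > 0" using b False unfolding r_def by simp
  define K where "K = nat \<lceil>r\<rceil>"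
  have K1: "1 \<le> K" and Kr: "r \<le> real K" "real K \<le> r + 1" using r unfolding K_def by linarith+
  define m where "m = max n K"
  have "(\<Sum>k<n. ln (1 + a k)) \<le> (\<Sum>k<m. ln (1 + a k))"
    using a0 by (intro sum_mono2) (auto simp: m_def)
  also have "\<dots> = (\<Sum>k<K. ln (1 + a k)) + (\<Sum>k\<in>{K..<m}. ln (1 + a k))"
    using sum.atLeastLessThan_concat[of 0 K m "\<lambda>k. ln (1 + a k)"] by (simp add: m_def lessThan_atLeast0)
  also have "(\<Sum>k<K. ln (1 + a k)) \<le> (\<Sum>k<K. 4 * sqrt r * (1 / sqrt (real k + 1)))"
  proof (rule sum_mono)
    fix k
    have "ln (1 + a k) \<le> ln (1 + (r / (real k + 1))\<^sup>2)"
      using ab[of k] a0[of k] b unfolding r_def by (simp add: power_divide)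
    also have "\<dots> \<le> 4 * sqrt (r / (real k + 1))" using r by (intro ln_one_plus_sq_le) simp
    finally show "ln (1 + a k) \<le> 4 * sqrt r * (1 / sqrt (real k + 1))"
      by (simp add: real_sqrt_divide)
  qed
  also have "\<dots> \<le> 4 * sqrt r * (2 * sqrt (real K))"
    by (simp only: sum_distrib_left[symmetric]) (intro mult_left_mono sum_inverse_sqrt_le; use r in simp)
  also have "\<dots> \<le> 8 * (r + 1)"
  proof -
    have "sqrt r * sqrt (real K) \<le> sqrt ((r + 1) * (r + 1))"
      unfolding real_sqrt_mult[symmetric] using Kr r by (intro real_sqrt_le_mono mult_mono) auto
    then show ?thesis using r by simp
  qed
  also have "(\<Sum>k\<in>{K..<m}. ln (1 + a k)) \<le> (\<Sum>k\<in>{K..<m}. b * (1 / (real k + 1)\<^sup>2))"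
    using a0 ab ln_add_one_self_le_self order_trans by (intro sum_mono) fastforce
  also have "\<dots> \<le> b * (1 / real K)"
    by (simp only: sum_distrib_left[symmetric]) (intro mult_left_mono sum_inverse_sq_tail_le K1, auto simp: m_def b)
  also have "\<dots> \<le> r"
  proof -
    have "b = r * r" using b unfolding r_def by simp
    moreover have "r * r \<le> r * real K" using Kr(1) r by (intro mult_left_mono) auto
    ultimately show ?thesis using K1 by (simp add: field_simps)
  qed
  finally show ?thesis unfolding r_def by simp
qed

lemma suminf_ln_one_plus_le:
  fixes a :: "nat \<Rightarrow> real"
  assumes "b \<ge> 0" and a0: "\<And>k. 0 \<le> a k" and "\<And>k. a k \<le> b / (real k + 1)\<^sup>2"
  shows "summable (\<lambda>k. ln (1 + a k))" and "(\<Sum>k. ln (1 + a k)) \<le> 9 * (sqrt b + 1)"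
proof -
  have nn: "0 \<le> ln (1 + a k)" for k using a0[of k] by simp
  show s: "summable (\<lambda>k. ln (1 + a k))"
    by (rule summableI_nonneg_bounded[OF nn sum_ln_one_plus_le[OF assms]])
  show "(\<Sum>k. ln (1 + a k)) \<le> 9 * (sqrt b + 1)"
    by (rule suminf_le_const[OF s sum_ln_one_plus_le[OF assms]])
qed

lemma summable_inverse_sq_Suc: "summable (\<lambda>k. 1 / (real k + 1)\<^sup>2)"
proof -
  have "summable (\<lambda>n. inverse (real n ^ 2))" by (rule inverse_power_summable) simp
  then have "summable (\<lambda>n. inverse (real (Suc n) ^ 2))" by (subst summable_Suc_iff)
  then show ?thesis by (simp add: field_simps)
qed

lemma suminf_ln_one_plus_eigen_le:
  fixes \<mu> :: "nat \<Rightarrow> real"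
  assumes mu_pos: "\<And>k. \<mu> k > 0" and mu_le: "\<And>k. \<mu> k \<le> c2 / (real k + 1)\<^sup>2"
    and c2: "c2 > 0" and lam: "lam > 0" and M: "M \<ge> 0"
  shows "summable (\<lambda>k. ln (1 + M * \<mu> k / lam))"
    and "(\<Sum>k. ln (1 + M * \<mu> k / lam)) \<le> 9 * (sqrt (c2 / 2) + 1) * (sqrt (2 * M / lam) + 1)"
proof -
  have nonneg: "0 \<le> M * \<mu> k / lam" for k using M mu_pos[of k] lam by simp
  have le: "M * \<mu> k / lam \<le> c2 * M / lam / (real k + 1)\<^sup>2" for k
    using mult_left_mono[OF mu_le[of k] M] lam by (simp add: field_simps)
  have "0 \<le> c2 * M / lam" using c2 M lam by simp
  note bound = suminf_ln_one_plus_le[OF this nonneg le]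
  show "summable (\<lambda>k. ln (1 + M * \<mu> k / lam))" by (rule bound(1))
  have "sqrt (c2 * M / lam) = sqrt (c2 / 2) * sqrt (2 * M / lam)"
    by (simp add: real_sqrt_mult[symmetric])
  then have "9 * (sqrt (c2 * M / lam) + 1) \<le> 9 * (sqrt (c2 / 2) + 1) * (sqrt (2 * M / lam) + 1)"
    using c2 M lam by (simp add: algebra_simps)
  with bound(2) show "(\<Sum>k. ln (1 + M * \<mu> k / lam)) \<le> 9 * (sqrt (c2 / 2) + 1) * (sqrt (2 * M / lam) + 1)"
    by linarith
qed

lemma free_energy_le_rate:
  fixes S H \<beta> lam t w :: real
  assumes S: "S \<le> 9 * (t + 1) * (w + 1)" and t: "t \<ge> 0" and "w \<ge> 0" and H: "H \<ge> 0"
    and b: "\<beta> > 0" and lam: "lam > 0"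
  shows "S / (2 * \<beta>) + lam / 2 * H\<^sup>2 \<le> 9 / 2 * (t + 1) * (1 / \<beta> * (w + 1) + lam * (H / sqrt \<beta> + H\<^sup>2))"
proof -
  have "S / (2 * \<beta>) \<le> 9 / 2 * (t + 1) * (1 / \<beta> * (w + 1))"
    using divide_right_mono[OF S, of "2 * \<beta>"] b by simp
  moreover have "1 / 2 * (lam * H\<^sup>2) \<le> 9 / 2 * (t + 1) * (lam * H\<^sup>2)"
    using t lam by (intro mult_right_mono) auto
  moreover have "9 / 2 * (t + 1) * (lam * H\<^sup>2) \<le> 9 / 2 * (t + 1) * (lam * (H / sqrt \<beta> + H\<^sup>2))"
    using t lam H b by (intro mult_left_mono) auto
  ultimately show ?thesis by (simp add: distrib_left)
qed

text \<open>Only the upper bound of (A1) is used.\<close>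
theorem proposition7:
  fixes f :: "nat \<Rightarrow> 'a::{real_inner,complete_space}" and \<mu> :: "nat \<Rightarrow> real"
  assumes onb: "orthonormal_basis f"
    and mu_pos: "\<And>k. \<mu> k > 0"
    and mu_dec: "decseq \<mu>"
    and A1: "\<exists>c1 c2. c1 > 0 \<and> c2 > 0 \<and>
               (\<forall>k. c1 / (real k + 1)\<^sup>2 \<le> \<mu> k \<and> \<mu> k \<le> c2 / (real k + 1)\<^sup>2)"
  shows "\<exists>C>0. \<forall>(lam::real) (\<beta>::real) (M::real) (L::'a \<Rightarrow> real) (gradL::'a \<Rightarrow> 'a) (xt::'a).
     lam > 0 \<longrightarrow> \<beta> > 0 \<longrightarrow>
     (\<forall>x. (L has_derivative (\<lambda>h. inner (gradL x) h)) (at x)) \<longrightarrow>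
     M-lipschitz_on UNIV gradL \<longrightarrow>
     in_HK \<mu> f xt \<longrightarrow>
     (\<forall>x. in_HK \<mu> f x \<longrightarrow>
        L xt + lam / 2 * (HK_norm \<mu> f xt)\<^sup>2 \<le> L x + lam / 2 * (HK_norm \<mu> f x)\<^sup>2) \<longrightarrow>
     integrable (gauss_ref \<mu> f lam \<beta>) (\<lambda>x. exp (- \<beta> * L x)) \<longrightarrow>
     integrable (gibbs \<mu> f lam \<beta> L) L \<longrightarrow>
     (\<integral>x. L x \<partial>gibbs \<mu> f lam \<beta> L) - L xt
       \<le> C * (1 / \<beta> * (sqrt (2 * M / lam) + 1)
              + lam * (HK_norm \<mu> f xt / sqrt \<beta> + (HK_norm \<mu> f xt)\<^sup>2))"
proof -
  obtain c2 where c2: "c2 > 0" and mu_le: "\<And>k. \<mu> k \<le> c2 / (real k + 1)\<^sup>2" using A1 by blast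
  have summable_mu: "summable \<mu>"
    using mu_pos mu_le by (intro summable_comparison_test'[OF summable_mult[OF summable_inverse_sq_Suc, of c2]])
      (simp add: less_imp_le)
  define C where "C = 9 / 2 * (sqrt (c2 / 2) + 1)"
  show ?thesis
  proof (intro exI[of _ C] conjI allI impI)
    show "C > 0" unfolding C_def using c2 by (simp add: add_pos_nonneg)
    fix lam \<beta> M :: real and L :: "'a \<Rightarrow> real" and gradL :: "'a \<Rightarrow> 'a" and xt :: 'a
    assume lam: "lam > 0" and b: "\<beta> > 0"
      and der: "\<forall>x. (L has_derivative (\<lambda>h. inner (gradL x) h)) (at x)"
      and lip: "M-lipschitz_on UNIV gradL" and in_HK: "in_HK \<mu> f xt"
      and iW: "integrable (gauss_ref \<mu> f lam \<beta>) (\<lambda>x. exp (- \<beta> * L x))"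
      and iL: "integrable (gibbs \<mu> f lam \<beta> L) L"
    note ln_sum = suminf_ln_one_plus_eigen_le[OF mu_pos mu_le c2 lam lipschitz_on_nonneg[OF lip]]
    have "(\<integral>x. L x \<partial>gibbs \<mu> f lam \<beta> L) - L xt
        \<le> (\<Sum>k. ln (1 + M * \<mu> k / lam)) / (2 * \<beta>) + lam / 2 * (HK_norm \<mu> f xt)\<^sup>2"
      using gibbs_mean_le[OF onb mu_pos summable_mu lam b _ lip in_HK iW iL ln_sum(1)] der by simp
    also have "\<dots> \<le> C * (1 / \<beta> * (sqrt (2 * M / lam) + 1)
        + lam * (HK_norm \<mu> f xt / sqrt \<beta> + (HK_norm \<mu> f xt)\<^sup>2))"
      unfolding C_def
      using c2 lam lipschitz_on_nonneg[OF lip]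
      by (intro free_energy_le_rate[OF ln_sum(2) _ _ HK_norm_nonneg[OF mu_pos in_HK] b lam]) auto
    finally show "(\<integral>x. L x \<partial>gibbs \<mu> f lam \<beta> L) - L xt
       \<le> C * (1 / \<beta> * (sqrt (2 * M / lam) + 1)
              + lam * (HK_norm \<mu> f xt / sqrt \<beta> + (HK_norm \<mu> f xt)\<^sup>2))" .
  qed
qed

end
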